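(* Let $m,k\ge1$, let $A_0$ be a symmetric positive definite $2m\times2m$ matrix and let $A_1$ be a symmetric, non-degenerate, $J$-hyperbolic $2k\times 2k$ matrix. Define $H:\mathbb{R}^{2m}\times\mathbb{R}^{2k}\to\mathbb{R}$ by $$H(x,y)=\tfrac12x^TA_0x+\tfrac12y^TA_1y-1.$$ Then $H_0(x):=\frac12x^TA_0x-1$ satisfies $dH_0(Y_0)-H_0>0$ on $\mathbb{R}^{2m}$ for the Liouville vector field $Y_0=\frac12x\partial_x$, and $H$ is a strongly tentacular Hamiltonian; in particular $H^{-1}(0)$ is a tentacular hyperboloid.
   Context: $\mathbb{R}^{2n}$ carries the standard symplectic form $\omega_0$ and $\mathbb{J}=\begin{pmatrix}0&I\\-I&0\end{pmatrix}$; a symmetric matrix $A$ is $J$-hyperbolic if $\mathbb{J}A$ has no eigenvalues on $i\mathbb{R}$. A function is coercive if all its sublevel sets are compact. The Poisson bracket is $\{F,H\}=\omega_0(X_F,X_H)$ where $dH=\omega_0(\cdot,X_H)$. A Liouville vector field $Y$ ($d\iota_Y\omega_0=\omega_0$) is asymptotically regular if $\|DY(x)\|<c$ for some $c>0$ and all $x$. Let $\mathcal{H}$ be the class of smooth $H:\mathbb{R}^{2n}\to\mathbb{R}$ such that, with $\Sigma:=H^{-1}(0)$: (h1) there exist an asymptotically regular Liouville vector field $Y$ and $c,c'>0$ with $dH(Y)(x)\ge c|x|^2-c'$ for all $x$; (h2) $\sup_x\|D^3H(x)\|\,|x|<\infty$; (h3) there is a coercive function $F$ defined near $\Sigma$ such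 that for all $x\in\Sigma$ outside a compact set either $\{H,F\}(x)\neq0$ or $\{H,\{H,F\}\}(x)>0$. $H^{-1}(0)$ is of restricted contact type if there is an asymptotically regular Liouville vector field $Y$ with $dH(Y)>0$ on $H^{-1}(0)$. $H\in\mathcal{H}$ is strongly tentacular if $H^{-1}(0)$ is of restricted contact type. A hyperboloid is the zero set of $\frac12x^TAx-1$ with $A$ symmetric non-degenerate of signature $(l,2n-l)$, $1\le l\le 2n-1$; a symplectic hyperboloid is an orbit of hyperboloids under the linear symplectic group $\operatorname{Sp}(\mathbb{R}^{2n})$; it is a tentacular hyperboloid if it has a representative of the form $\frac12x^TAx-1$ that is strongly tentacular. *)

theory Defs
  imports "HOL-Analysis.Analysis"
begin

text \<open>The space R^{2n} is modelled as real^('n + 'n): the coordinates Inl i are the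
  q-coordinates and Inr i the p-coordinates, n = CARD('n).\<close>

definition Jmat :: "real^('n::finite + 'n)^('n + 'n)" where
  "Jmat = (\<chi> i j. case (i, j) of
             (Inl a, Inr b) \<Rightarrow> (if a = b then 1 else 0)
           | (Inr a, Inl b) \<Rightarrow> (if a = b then -1 else 0)
           | _ \<Rightarrow> 0)"

definition omega0 :: "real^('n::finite + 'n) \<Rightarrow> real^('n + 'n) \<Rightarrow> real" where
  "omega0 u v = u \<bullet> (Jmat *v v)"

coinductive smooth_on :: "'a::real_normed_vector set \<Rightarrow> ('a \<Rightarrow> 'b::real_normed_vector) \<Rightarrow> bool" where
  "open U \<Longrightarrow> f differentiable_on U \<Longrightarrow> (\<forall>v. smooth_on U (\<lambda>x. frechet_derivative f (at x) v))
   \<Longrightarrow> smooth_on U f"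

definition hamvf :: "(real^('n::finite + 'n) \<Rightarrow> real) \<Rightarrow> real^('n + 'n) \<Rightarrow> real^('n + 'n)" where
  "hamvf H x = (THE v. \<forall>u. frechet_derivative H (at x) u = omega0 u v)"

definition poisson :: "(real^('n::finite + 'n) \<Rightarrow> real) \<Rightarrow> (real^('n + 'n) \<Rightarrow> real) \<Rightarrow> real^('n + 'n) \<Rightarrow> real" where
  "poisson F H x = omega0 (hamvf F x) (hamvf H x)"

text \<open>Liouville vector field: d(iota_Y omega0) = omega0, written out for the constant form omega0.\<close>
definition liouville :: "(real^('n::finite + 'n) \<Rightarrow> real^('n + 'n)) \<Rightarrow> bool" where
  "liouville Y \<longleftrightarrow> smooth_on UNIV Y \<and>
     (\<forall>x u v. omega0 (frechet_derivative Y (at x) u) v + omega0 u (frechet_derivative Y (at x) v)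
              = omega0 u v)"

definition asymp_regular :: "(real^('n::finite + 'n) \<Rightarrow> real^('n + 'n)) \<Rightarrow> bool" where
  "asymp_regular Y \<longleftrightarrow> (\<exists>c>0. \<forall>x. onorm (frechet_derivative Y (at x)) < c)"

definition third_deriv :: "(real^('n::finite + 'n) \<Rightarrow> real) \<Rightarrow> real^('n + 'n) \<Rightarrow> real^('n + 'n)
     \<Rightarrow> real^('n + 'n) \<Rightarrow> real^('n + 'n) \<Rightarrow> real" where
  "third_deriv H x u v w =
     frechet_derivative (\<lambda>y. frechet_derivative (\<lambda>z. frechet_derivative H (at z) u) (at y) v) (at x) w"

definition coercive_on :: "'a::topological_space set \<Rightarrow> ('a \<Rightarrow> real) \<Rightarrow> bool" where
  "coercive_on U F \<longleftrightarrow> (\<forall>c. compact {x \<in> U. F x \<le> c})"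

definition h1 :: "(real^('n::finite + 'n) \<Rightarrow> real) \<Rightarrow> bool" where
  "h1 H \<longleftrightarrow> (\<exists>Y c c'. liouville Y \<and> asymp_regular Y \<and> c > 0 \<and> c' > 0 \<and>
      (\<forall>x. frechet_derivative H (at x) (Y x) \<ge> c * (norm x)\<^sup>2 - c'))"

text \<open>sup_x |D^3 H(x)| |x| < infinity, with the operator norm of the trilinear form.\<close>
definition h2 :: "(real^('n::finite + 'n) \<Rightarrow> real) \<Rightarrow> bool" where
  "h2 H \<longleftrightarrow> (\<exists>C. \<forall>x u v w. \<bar>third_deriv H x u v w\<bar> * norm x \<le> C * norm u * norm v * norm w)"

definition h3 :: "(real^('n::finite + 'n) \<Rightarrow> real) \<Rightarrow> bool" where
  "h3 H \<longleftrightarrow> (\<exists>U F K. open U \<and> H -` {0} \<subseteq> U \<and> smooth_on U F \<and> coercive_on U F \<and> compact K \<and>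
      (\<forall>x\<in>H -` {0} - K. poisson H F x \<noteq> 0 \<or> poisson H (poisson H F) x > 0))"

definition classH :: "(real^('n::finite + 'n) \<Rightarrow> real) \<Rightarrow> bool" where
  "classH H \<longleftrightarrow> smooth_on UNIV H \<and> h1 H \<and> h2 H \<and> h3 H"

definition restricted_contact :: "(real^('n::finite + 'n) \<Rightarrow> real) \<Rightarrow> bool" where
  "restricted_contact H \<longleftrightarrow> (\<exists>Y. liouville Y \<and> asymp_regular Y \<and>
      (\<forall>x. H x = 0 \<longrightarrow> frechet_derivative H (at x) (Y x) > 0))"

definition strongly_tentacular :: "(real^('n::finite + 'n) \<Rightarrow> real) \<Rightarrow> bool" where
  "strongly_tentacular H \<longleftrightarrow> classH H \<and> restricted_contact H"

definition cmat :: "real^'n::finite^'m::finite \<Rightarrow> complex^'n^'m" where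
  "cmat M = (\<chi> i j. complex_of_real (M $ i $ j))"

definition J_hyperbolic :: "real^('n::finite + 'n)^('n + 'n) \<Rightarrow> bool" where
  "J_hyperbolic A \<longleftrightarrow> (\<forall>\<mu>::real. \<forall>v::complex^('n + 'n).
      cmat (Jmat ** A) *v v = (\<i> * complex_of_real \<mu>) *s v \<longrightarrow> v = 0)"

definition quadH :: "real^'n::finite^'n \<Rightarrow> real^'n \<Rightarrow> real" where
  "quadH A x = 1/2 * (x \<bullet> (A *v x)) - 1"

text \<open>Matrix of a hyperboloid: symmetric, non-degenerate, signature (l, 2n-l) with 1 \<le> l \<le> 2n-1,
  i.e. at least one positive and at least one negative eigenvalue.\<close>
definition hyperboloid_matrix :: "real^'n::finite^'n \<Rightarrow> bool" where
  "hyperboloid_matrix A \<longleftrightarrow> transpose A = A \<and> invertible A \<and>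
     (\<exists>c>0. \<exists>v. v \<noteq> 0 \<and> A *v v = c *s v) \<and> (\<exists>c<0. \<exists>v. v \<noteq> 0 \<and> A *v v = c *s v)"

definition symplectic_matrix :: "real^('n::finite + 'n)^('n + 'n) \<Rightarrow> bool" where
  "symplectic_matrix P \<longleftrightarrow> invertible P \<and> (\<forall>u v. omega0 (P *v u) (P *v v) = omega0 u v)"

definition tentacular_hyperboloid :: "(real^('n::finite + 'n)) set \<Rightarrow> bool" where
  "tentacular_hyperboloid S \<longleftrightarrow> (\<exists>P A. symplectic_matrix P \<and> hyperboloid_matrix A \<and>
      (\<lambda>x. P *v x) ` S = quadH A -` {0} \<and> strongly_tentacular (quadH A))"

text \<open>Identification R^{2m} x R^{2k} = R^{2(m+k)} compatible with the standard symplectic forms.\<close>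
definition projX :: "real^(('m::finite + 'k::finite) + ('m + 'k)) \<Rightarrow> real^('m + 'm)" where
  "projX z = (\<chi> i. case i of Inl a \<Rightarrow> z $ Inl (Inl a) | Inr a \<Rightarrow> z $ Inr (Inl a))"

definition projY :: "real^(('m::finite + 'k::finite) + ('m + 'k)) \<Rightarrow> real^('k + 'k)" where
  "projY z = (\<chi> i. case i of Inl a \<Rightarrow> z $ Inl (Inr a) | Inr a \<Rightarrow> z $ Inr (Inr a))"

end

theory Submission
  imports Defs "HOL-Computational_Algebra.Fundamental_Theorem_Algebra"
begin

(*
  Write H(z) = z\<bullet>Az/2 - 1 with A = A0 \<oplus> A1 block diagonal. Being quadratic, H is smooth with
  vanishing third derivative, and Euler's identity dH(z/2) = H + 1 makes z/2 a Liouville field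
  transverse to H\<^sup>-\<^sup>1(0); the same identity gives dH0(Y0) - H0 = 1.

  The content lies in the y-directions, where A1 is indefinite. Since J A1 has no imaginary
  eigenvalues, the Lyapunov inequality y\<bullet>A1 J S y \<ge> |y|\<^sup>2 has a symmetric solution S: otherwise
  a hyperplane separating the matrices \<ge> I from the subspace of all B S + (B S)\<^sup>T, B = A1 J,
  yields a nonzero positive semidefinite matrix whose range is invariant and isotropic under J A1,
  and an eigenvector there would have an imaginary eigenvalue. Adding the Hamiltonian field of
  t y\<bullet>Sy/2 to z/2 keeps the Liouville property and gives the growth condition (h1). For (h3) take
  F = H0(x) + (y\<bullet>Sy)\<^sup>2 + d|y|\<^sup>4: H0 is conserved, the flow derivative of y\<bullet>Sy dominates 2|y|\<^sup>2, so
  for small d the vanishing of {H,F} forces {H,{H,F}} > 0 as long as y \<noteq> 0, and on H\<^sup>-\<^sup>1(0) y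
  vanishes only on a compact set. Finally A has positive eigenvalues from A0 and negative ones
  from A1, so H\<^sup>-\<^sup>1(0) is a hyperboloid, already in standard position.
*)

lemma sum_UNIV_Plus:
  fixes f :: "'a::finite + 'b::finite \<Rightarrow> 'c::comm_monoid_add"
  shows "(\<Sum>i\<in>UNIV. f i) = (\<Sum>a\<in>UNIV. f (Inl a)) + (\<Sum>b\<in>UNIV. f (Inr b))"
  using sum.Plus[of "UNIV::'a set" "UNIV::'b set" f] by (simp add: comp_def)

lemma all_sum_iff: "(\<forall>i. P i) \<longleftrightarrow> (\<forall>a. P (Inl a)) \<and> (\<forall>b. P (Inr b))"
  by (metis sum.exhaust)

lemma norm_le_one_plus_power2: "norm z \<le> 1 + (norm z)\<^sup>2"
  using zero_le_power2[of "norm z - 1/2"] by (simp add: power2_eq_square algebra_simps)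

lemma Jmat_mult_Inl: "(Jmat *v v) $ Inl a = v $ Inr a"
  by (simp add: Jmat_def matrix_vector_mult_def sum_UNIV_Plus if_distrib[of "\<lambda>c. c * _"] cong: if_cong)

lemma Jmat_mult_Inr: "(Jmat *v v) $ Inr a = - v $ Inl a"
  by (simp add: Jmat_def matrix_vector_mult_def sum_UNIV_Plus if_distrib[of "\<lambda>c. c * _"] cong: if_cong)

lemma Jmat_mult_Jmat_mult: "Jmat *v (Jmat *v v) = - (v::real^('n::finite + 'n))"
  by (simp add: vec_eq_iff all_sum_iff Jmat_mult_Inl Jmat_mult_Inr)

lemma inner_Jmat_right: "(u::real^('n::finite + 'n)) \<bullet> (Jmat *v w) = - ((Jmat *v u) \<bullet> w)"
  by (simp add: inner_vec_def sum_UNIV_Plus Jmat_mult_Inl Jmat_mult_Inr sum_negf[symmetric]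
      algebra_simps sum.distrib[symmetric])

lemma inner_Jmat_self: "(u::real^('n::finite + 'n)) \<bullet> (Jmat *v u) = 0"
  using inner_Jmat_right[of u u] by (simp add: inner_commute)

lemma inner_Jmat_Jmat: "(Jmat *v u) \<bullet> (Jmat *v (w::real^('n::finite + 'n))) = u \<bullet> w"
  using inner_Jmat_right[of "Jmat *v u" w] by (simp add: Jmat_mult_Jmat_mult)

lemma transpose_Jmat: "transpose (Jmat::real^('n::finite + 'n)^('n + 'n)) = - Jmat"
  by (simp add: vec_eq_iff all_sum_iff transpose_def Jmat_def)

lemma matrix_vector_mult_uminus_right: "(M::real^'n::finite^'m::finite) *v (- x) = - (M *v x)"
  by (simp add: vec_eq_iff matrix_vector_mult_def sum_negf[symmetric])

lemma matrix_vector_mult_uminus_left: "(- M) *v (x::real^'n::finite) = - ((M::real^'n^'m::finite) *v x)"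
  by (simp add: vec_eq_iff matrix_vector_mult_def sum_negf[symmetric])

lemma transpose_add: "transpose (A + B) = transpose A + transpose (B::real^'n::finite^'m::finite)"
  by (simp add: vec_eq_iff transpose_def)

lemma transpose_uminus: "transpose (- A) = - transpose (A::real^'n::finite^'m::finite)"
  by (simp add: vec_eq_iff transpose_def)

lemma transpose_diff: "transpose (A - B) = transpose A - transpose (B::real^'n::finite^'m::finite)"
  by (simp add: vec_eq_iff transpose_def)

lemma transpose_zero: "transpose (0::real^'n::finite^'m::finite) = 0"
  by (simp add: vec_eq_iff transpose_def)

lemma inner_matrix_transpose: "(x::real^'n::finite) \<bullet> (A *v y) = (transpose A *v x) \<bullet> y"
  by (simp add: dot_lmul_matrix[symmetric])

lemma inner_symmetric_matrix: "transpose A = A \<Longrightarrow> (x::real^'n::finite) \<bullet> (A *v y) = (A *v x) \<bullet> y"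
  by (metis inner_matrix_transpose)

lemma inner_axis_matrix_axis: "axis i 1 \<bullet> (M *v axis j 1) = (M::real^'n::finite^'m::finite) $ i $ j"
  by (simp add: matrix_vector_mult_def inner_vec_def axis_def if_distrib[of "\<lambda>c. c * _"]
      if_distrib[of "\<lambda>c. _ * c"] cong: if_cong)

lemma symmetric_matrixI:
  assumes "\<And>u w. u \<bullet> ((M::real^'n::finite^'n) *v w) = (M *v u) \<bullet> w"
  shows "transpose M = M"
proof -
  have "M $ j $ i = M $ i $ j" for i j
    using assms[of "axis i 1" "axis j 1"] inner_axis_matrix_axis[of i M j] inner_axis_matrix_axis[of j M i]
    by (simp add: inner_commute)
  then show ?thesis by (simp add: vec_eq_iff transpose_def)
qed

lemma projX_Inl [simp]: "projX z $ Inl a = z $ Inl (Inl a)" by (simp add: projX_def)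
lemma projX_Inr [simp]: "projX z $ Inr a = z $ Inr (Inl a)" by (simp add: projX_def)
lemma projY_Inl [simp]: "projY z $ Inl a = z $ Inl (Inr a)" by (simp add: projY_def)
lemma projY_Inr [simp]: "projY z $ Inr a = z $ Inr (Inr a)" by (simp add: projY_def)

definition joinXY :: "real^('m::finite + 'm) \<Rightarrow> real^('k::finite + 'k) \<Rightarrow> real^(('m + 'k) + ('m + 'k))" where
  "joinXY x y = (\<chi> i. case i of Inl (Inl a) \<Rightarrow> x $ Inl a | Inr (Inl a) \<Rightarrow> x $ Inr a
                              | Inl (Inr b) \<Rightarrow> y $ Inl b | Inr (Inr b) \<Rightarrow> y $ Inr b)"

lemma projX_joinXY [simp]: "projX (joinXY x y) = x"
  by (simp add: vec_eq_iff joinXY_def all_sum_iff)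

lemma projY_joinXY [simp]: "projY (joinXY x y) = y"
  by (simp add: vec_eq_iff joinXY_def all_sum_iff)

lemma joinXY_proj [simp]: "joinXY (projX z) (projY z) = z"
  by (simp add: vec_eq_iff joinXY_def all_sum_iff)

lemma proj_XY_eqI: "projX u = projX w \<Longrightarrow> projY u = projY w \<Longrightarrow> u = w"
  by (metis joinXY_proj)

lemma projX_add [simp]: "projX (u + w) = projX u + projX w" by (simp add: vec_eq_iff all_sum_iff)
lemma projY_add [simp]: "projY (u + w) = projY u + projY w" by (simp add: vec_eq_iff all_sum_iff)
lemma projX_scaleR [simp]: "projX (c *\<^sub>R u) = c *\<^sub>R projX u" by (simp add: vec_eq_iff all_sum_iff)
lemma projY_scaleR [simp]: "projY (c *\<^sub>R u) = c *\<^sub>R projY u" by (simp add: vec_eq_iff all_sum_iff)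
lemma projX_uminus [simp]: "projX (- u) = - projX u" by (simp add: vec_eq_iff all_sum_iff)
lemma projY_uminus [simp]: "projY (- u) = - projY u" by (simp add: vec_eq_iff all_sum_iff)
lemma projX_zero [simp]: "projX 0 = 0" by (simp add: vec_eq_iff all_sum_iff)
lemma projY_zero [simp]: "projY 0 = 0" by (simp add: vec_eq_iff all_sum_iff)

lemma linear_projX: "linear projX" by (rule linearI) simp_all
lemma linear_projY: "linear projY" by (rule linearI) simp_all

lemma inner_projXY:
  "(u::real^(('m::finite + 'k::finite) + ('m + 'k))) \<bullet> w = projX u \<bullet> projX w + projY u \<bullet> projY w"
  by (simp add: inner_vec_def sum_UNIV_Plus algebra_simps)

lemma projX_Jmat: "projX (Jmat *v z) = Jmat *v projX z"
  by (simp add: vec_eq_iff all_sum_iff Jmat_mult_Inl Jmat_mult_Inr)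

lemma projY_Jmat: "projY (Jmat *v z) = Jmat *v projY z"
  by (simp add: vec_eq_iff all_sum_iff Jmat_mult_Inl Jmat_mult_Inr)

definition block_diag :: "real^('m::finite + 'm)^('m + 'm) \<Rightarrow> real^('k::finite + 'k)^('k + 'k)
    \<Rightarrow> real^(('m + 'k) + ('m + 'k))^(('m + 'k) + ('m + 'k))" where
  "block_diag A B = matrix (\<lambda>z. joinXY (A *v projX z) (B *v projY z))"

lemma block_diag_mult: "block_diag A B *v z = joinXY (A *v projX z) (B *v projY z)"
proof -
  have "linear (\<lambda>z. joinXY (A *v projX z) (B *v projY z))"
    by (rule linearI; rule proj_XY_eqI)
      (simp_all add: matrix_vector_right_distrib matrix_vector_mult_scaleR)
  then show ?thesis unfolding block_diag_def by (simp add: matrix_works)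
qed

lemma projX_block_diag [simp]: "projX (block_diag A B *v z) = A *v projX z"
  by (simp add: block_diag_mult)

lemma projY_block_diag [simp]: "projY (block_diag A B *v z) = B *v projY z"
  by (simp add: block_diag_mult)

lemma transpose_block_diag:
  "transpose A = A \<Longrightarrow> transpose B = B \<Longrightarrow> transpose (block_diag A B) = block_diag A B"
  by (rule symmetric_matrixI) (simp add: inner_projXY inner_symmetric_matrix)

lemma inner_block_diag:
  "z \<bullet> (block_diag A B *v z) = projX z \<bullet> (A *v projX z) + projY z \<bullet> (B *v projY z)"
  by (simp add: inner_projXY)

section \<open>Hamiltonian vector fields, quadratic forms and smoothness\<close>

lemma hamvf_gradient:
  assumes "(H has_derivative (\<lambda>u. u \<bullet> g)) (at x)"
  shows "hamvf H x = - (Jmat *v g)"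
proof -
  have fd: "frechet_derivative H (at x) = (\<lambda>u. u \<bullet> g)"
    using frechet_derivative_at[OF assms] by simp
  have ok: "\<forall>u. u \<bullet> g = omega0 u (- (Jmat *v g))"
    by (simp add: omega0_def matrix_vector_mult_uminus_right Jmat_mult_Jmat_mult)
  have unique: "v = - (Jmat *v g)" if "\<forall>u. u \<bullet> g = omega0 u v" for v
  proof -
    have "\<forall>u. u \<bullet> (g - Jmat *v v) = 0" using that by (simp add: omega0_def inner_diff_right)
    then have "g = Jmat *v v" by (metis inner_eq_zero_iff right_minus_eq)
    then show ?thesis by (simp add: Jmat_mult_Jmat_mult)
  qed
  show ?thesis unfolding hamvf_def fd
    by (rule the_equality) (use ok unique in auto)
qed

lemma poisson_gradient:
  assumes H: "(H has_derivative (\<lambda>u. u \<bullet> g)) (at x)"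
    and F: "(F has_derivative F') (at x)" and lin: "linear F'"
  shows "poisson H F x = F' (- (Jmat *v g))"
proof -
  define gF where "gF = adjoint F' 1"
  have F': "F' = (\<lambda>u. u \<bullet> gF)"
    using adjoint_works[OF lin] by (simp add: fun_eq_iff gF_def)
  show ?thesis
    using F unfolding poisson_def hamvf_gradient[OF H] F'
    by (subst hamvf_gradient) (simp_all add: omega0_def matrix_vector_mult_uminus_right Jmat_mult_Jmat_mult)
qed

definition qform :: "real^'n::finite^'n \<Rightarrow> real^'n \<Rightarrow> real" where
  "qform B y = y \<bullet> (B *v y)"

lemma has_derivative_qform: "(qform B has_derivative (\<lambda>u. y \<bullet> (B *v u) + u \<bullet> (B *v y))) (at y)"
  unfolding qform_def
  by (rule has_derivative_inner[OF has_derivative_ident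
        bounded_linear.has_derivative[OF matrix_vector_mul_bounded_linear has_derivative_ident]])

lemma qform_bound: "\<exists>K\<ge>0. \<forall>y. \<bar>qform B y\<bar> \<le> K * (y \<bullet> y)"
proof -
  obtain K where K: "\<And>x. norm (B *v x) \<le> norm x * K" "K > 0"
    using bounded_linear.pos_bounded[OF matrix_vector_mul_bounded_linear[of B]] by blast
  have "\<bar>qform B y\<bar> \<le> K * (y \<bullet> y)" for y
  proof -
    have "\<bar>qform B y\<bar> \<le> norm y * norm (B *v y)" unfolding qform_def by (rule Cauchy_Schwarz_ineq2)
    also have "\<dots> \<le> norm y * (norm y * K)" by (rule mult_left_mono[OF K(1)]) simp
    also have "\<dots> = K * (y \<bullet> y)" by (simp add: power2_norm_eq_inner[symmetric] power2_eq_square)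
    finally show ?thesis .
  qed
  then show ?thesis using K(2) by (intro exI[of _ K]) auto
qed

lemma has_derivative_quadH:
  assumes "transpose A = A"
  shows "(quadH A has_derivative (\<lambda>u. u \<bullet> (A *v x))) (at x)"
proof -
  have "((\<lambda>x. 1/2 * qform A x - 1) has_derivative (\<lambda>u. 1/2 * (x \<bullet> (A *v u) + u \<bullet> (A *v x)) - 0)) (at x)"
    by (intro has_derivative_diff has_derivative_mult_right has_derivative_qform has_derivative_const)
  moreover have "(\<lambda>u. 1/2 * (x \<bullet> (A *v u) + u \<bullet> (A *v x)) - 0) = (\<lambda>u. u \<bullet> (A *v x))"
    using inner_symmetric_matrix[OF assms, of x] by (auto simp: inner_commute)
  moreover have "quadH A = (\<lambda>x. 1/2 * qform A x - 1)"
    by (simp add: fun_eq_iff quadH_def qform_def)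
  ultimately show ?thesis by simp
qed

lemma frechet_derivative_quadH:
  "transpose A = A \<Longrightarrow> frechet_derivative (quadH A) (at x) = (\<lambda>u. u \<bullet> (A *v x))"
  by (metis frechet_derivative_at has_derivative_quadH)

lemma frechet_derivative_linear:
  fixes f :: "'a::euclidean_space \<Rightarrow> 'b::real_normed_vector"
  assumes "linear f"
  shows "frechet_derivative f (at x) = f"
  using frechet_derivative_at[OF linear_imp_has_derivative[OF assms]] by simp

lemma real_polynomial_function_has_derivative:
  assumes "real_polynomial_function f"
  shows "\<exists>f'. (\<forall>x. (f has_derivative f' x) (at x)) \<and> (\<forall>v. real_polynomial_function (\<lambda>x. f' x v))"
  using assms
proof induction
  case (linear f)
  then show ?case by (intro exI[of _ "\<lambda>x. f"]) (auto intro: bounded_linear.has_derivative)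
next
  case (const c)
  then show ?case by (intro exI[of _ "\<lambda>x v. 0"]) auto
next
  case (add f g)
  then obtain f' g' where "\<forall>x. (f has_derivative f' x) (at x)" "\<forall>v. real_polynomial_function (\<lambda>x. f' x v)"
    and "\<forall>x. (g has_derivative g' x) (at x)" "\<forall>v. real_polynomial_function (\<lambda>x. g' x v)" by blast
  then show ?case
    by (intro exI[of _ "\<lambda>x v. f' x v + g' x v"]) (auto intro: has_derivative_add)
next
  case (mult f g)
  then obtain f' g' where "\<forall>x. (f has_derivative f' x) (at x)" "\<forall>v. real_polynomial_function (\<lambda>x. f' x v)"
    and "\<forall>x. (g has_derivative g' x) (at x)" "\<forall>v. real_polynomial_function (\<lambda>x. g' x v)" by blast
  with mult.hyps show ?case
    by (intro exI[of _ "\<lambda>x v. f x * g' x v + f' x v * g x"])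
      (auto intro!: has_derivative_mult real_polynomial_function.intros(3,4))
qed

lemma smooth_on_real_polynomial_function:
  fixes f :: "'a::euclidean_space \<Rightarrow> real"
  assumes "real_polynomial_function f"
  shows "smooth_on UNIV f"
  using assms
proof (coinduction arbitrary: f rule: smooth_on.coinduct)
  case (smooth_on f)
  then obtain f' where f': "\<forall>x. (f has_derivative f' x) (at x)" "\<forall>v. real_polynomial_function (\<lambda>x. f' x v)"
    using real_polynomial_function_has_derivative by blast
  then have "frechet_derivative f (at x) = f' x" for x
    by (metis frechet_derivative_at)
  with f' show ?case
    by (auto simp: differentiable_on_def differentiable_def)
qed

lemma smooth_on_linear:
  fixes f :: "'a::euclidean_space \<Rightarrow> 'b::real_normed_vector"
  assumes "linear f"
  shows "smooth_on UNIV f"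
proof -
  have "smooth_on UNIV g" if "linear g \<or> (\<exists>c. g = (\<lambda>x. c))" for g :: "'a \<Rightarrow> 'b"
    using that
  proof (coinduction arbitrary: g rule: smooth_on.coinduct)
    case (smooth_on g)
    then show ?case
    proof
      assume "linear g"
      then show ?thesis
        by (auto simp: frechet_derivative_linear differentiable_on_def intro: linear_imp_differentiable)
    next
      assume "\<exists>c. g = (\<lambda>x. c)"
      then obtain c where "g = (\<lambda>x. c)" by blast
      moreover have "frechet_derivative (\<lambda>x::'a. c) (at x) = (\<lambda>v. 0)" for x
        by (metis frechet_derivative_at has_derivative_const)
      ultimately show ?thesis by (simp add: differentiable_on_def) blast
    qed
  qed
  then show ?thesis using assms by blast
qed

lemma real_polynomial_function_inner:
  fixes f g :: "'a::real_normed_vector \<Rightarrow> real^'n::finite"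
  assumes "bounded_linear f" "bounded_linear g"
  shows "real_polynomial_function (\<lambda>x. f x \<bullet> g x)"
  unfolding inner_vec_def inner_real_def
  using assms by (intro real_polynomial_function_sum real_polynomial_function.intros
      bounded_linear_compose[OF bounded_linear_vec_nth]) auto

lemma real_polynomial_function_qform:
  "bounded_linear f \<Longrightarrow> real_polynomial_function (\<lambda>x. qform B (f x))"
  unfolding qform_def
  by (intro real_polynomial_function_inner bounded_linear_compose[OF matrix_vector_mul_bounded_linear])

lemma smooth_quadH: "smooth_on UNIV (quadH A)"
proof -
  have "quadH A = (\<lambda>x. 1/2 * qform A (id x) + -1)"
    by (simp add: fun_eq_iff quadH_def qform_def)
  moreover have "real_polynomial_function (\<lambda>x. qform A (id x))"
    by (rule real_polynomial_function_qform) (simp add: id_def bounded_linear_ident)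
  ultimately show ?thesis
    by (simp only:) (intro smooth_on_real_polynomial_function real_polynomial_function.intros(3,4)
        real_polynomial_function.intros(2))
qed

section \<open>Symmetric and J-hyperbolic matrices\<close>

lemma psd_form_kernel:
  fixes W :: "'a::real_inner \<Rightarrow> 'a"
  assumes lin: "linear W" and sym: "\<And>u w. u \<bullet> W w = W u \<bullet> w"
    and psd: "\<And>y. y \<bullet> W y \<ge> 0" and x0: "x \<bullet> W x = 0"
  shows "W x = 0"
proof -
  have key: "y \<bullet> W x = 0" for y
  proof (rule ccontr)
    assume ne: "y \<bullet> W x \<noteq> 0"
    define a where "a = y \<bullet> W x"
    define b where "b = y \<bullet> W y"
    have b0: "b \<ge> 0" using psd unfolding b_def by simp
    define t where "t = - a / (b + 1)"
    have "(x + t *\<^sub>R y) \<bullet> W (x + t *\<^sub>R y) = 2 * t * a + t\<^sup>2 * b"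
      using x0 sym[of x y] unfolding a_def b_def
      by (simp add: linear_add[OF lin] linear_scale[OF lin] inner_add_left inner_add_right
          power2_eq_square algebra_simps inner_commute)
    also have "\<dots> < 0"
    proof -
      have ts: "t * (b+1) = -a" unfolding t_def using b0 by (simp add: field_simps)
      have "(b+1)\<^sup>2 * (2*t*a + t\<^sup>2*b) = 2*(t*(b+1))*a*(b+1) + (t*(b+1))\<^sup>2*b"
        by (simp add: algebra_simps power2_eq_square)
      also have "\<dots> = -(a\<^sup>2*(b+2))" using ts by (simp add: power2_eq_square algebra_simps)
      also have "\<dots> < 0" using ne b0 unfolding a_def[symmetric] by (simp add: mult_pos_pos)
      finally have "(b+1)\<^sup>2 * (2*t*a + t\<^sup>2*b) < 0" .
      then show ?thesis using b0 by (simp add: mult_less_0_iff)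
    qed
    finally show False using psd[of "x + t *\<^sub>R y"] by simp
  qed
  show ?thesis using key[of "W x"] by simp
qed

lemma symmetric_matrix_least_eigenvalue:
  fixes A :: "real^'n::finite^'n"
  assumes sym: "transpose A = A"
  shows "\<exists>v \<mu>. v \<noteq> 0 \<and> A *v v = \<mu> *\<^sub>R v \<and> (\<forall>y. \<mu> * (y \<bullet> y) \<le> y \<bullet> (A *v y))"
proof -
  let ?f = "\<lambda>y::real^'n. y \<bullet> (A *v y)"
  obtain i :: 'n where True by blast
  have "axis i (1::real) \<in> sphere (0::real^'n) 1" by simp
  then have ne: "sphere (0::real^'n) 1 \<noteq> {}" by blast
  have cont: "continuous_on (sphere 0 1) ?f"
    by (intro continuous_intros linear_continuous_on) (auto simp: linear_conv_bounded_linear[symmetric])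
  obtain v where v: "v \<in> sphere 0 1" and vmin: "\<forall>y\<in>sphere 0 1. ?f v \<le> ?f y"
    using continuous_attains_inf[OF compact_sphere ne cont] by blast
  define \<mu> where "\<mu> = ?f v"
  have bound: "\<mu> * (y \<bullet> y) \<le> y \<bullet> (A *v y)" for y
  proof (cases "y = 0")
    case True then show ?thesis by simp
  next
    case False
    define y1 where "y1 = (1 / norm y) *\<^sub>R y"
    have "y1 \<in> sphere 0 1" using False by (simp add: y1_def sphere_def)
    then have "\<mu> \<le> ?f y1" using vmin \<mu>_def by simp
    also have "?f y1 = ?f y / (norm y)\<^sup>2"
      by (simp add: y1_def matrix_vector_mult_scaleR power2_eq_square)
    finally have "\<mu> * (norm y)\<^sup>2 \<le> ?f y" using False by (simp add: field_simps)
    then show ?thesis by (simp add: power2_norm_eq_inner)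
  qed
  define W where "W = (\<lambda>y. A *v y - \<mu> *\<^sub>R y)"
  have linW: "linear W" unfolding W_def
    by (rule linearI) (simp_all add: matrix_vector_right_distrib matrix_vector_mult_scaleR algebra_simps)
  have symW: "u \<bullet> W w = W u \<bullet> w" for u w
    unfolding W_def using inner_symmetric_matrix[OF sym, of u w] by (simp add: inner_diff_left inner_diff_right)
  have psdW: "y \<bullet> W y \<ge> 0" for y using bound[of y] by (simp add: W_def inner_diff_right)
  have "v \<bullet> W v = 0" by (simp add: W_def inner_diff_right \<mu>_def) (use v in \<open>simp add: sphere_def norm_eq_1\<close>)
  then have "W v = 0" using psd_form_kernel[OF linW symW psdW] by blast
  then have "A *v v = \<mu> *\<^sub>R v" by (simp add: W_def)
  moreover have "v \<noteq> 0" using v by auto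
  ultimately show ?thesis using bound by blast
qed

lemma pos_def_lower_bound:
  fixes A :: "real^'n::finite^'n"
  assumes "transpose A = A" and "\<forall>x. x \<noteq> 0 \<longrightarrow> x \<bullet> (A *v x) > 0"
  obtains \<mu> where "\<mu> > 0" "\<And>x. \<mu> * (x \<bullet> x) \<le> x \<bullet> (A *v x)"
proof -
  obtain v \<mu> where v: "v \<noteq> 0" "A *v v = \<mu> *\<^sub>R v" and \<mu>: "\<forall>x. \<mu> * (x \<bullet> x) \<le> x \<bullet> (A *v x)"
    using symmetric_matrix_least_eigenvalue[OF assms(1)] by blast
  have "0 < v \<bullet> (A *v v)" using assms(2) v(1) by blast
  also have "\<dots> = \<mu> * (v \<bullet> v)" using v(2) by simp
  finally have "\<mu> > 0" using inner_ge_zero[of v] by (auto simp: zero_less_mult_iff)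
  with \<mu> show thesis using that by blast
qed

(* Horner evaluation of p(L) w. *)
definition mat_poly_apply :: "complex^'n::finite^'n \<Rightarrow> complex poly \<Rightarrow> complex^'n \<Rightarrow> complex^'n" where
  "mat_poly_apply L p = fold_coeffs (\<lambda>a f w. a *s w + L *v f w) p (\<lambda>w. 0)"

lemma mat_poly_apply_0[simp]: "mat_poly_apply L 0 w = 0" by (simp add: mat_poly_apply_def)

lemma mat_poly_apply_pCons[simp]: "mat_poly_apply L (pCons a p) w = a *s w + L *v mat_poly_apply L p w"
  by (cases "p = 0 \<and> a = 0") (auto simp add: mat_poly_apply_def)

lemma mat_poly_apply_add: "mat_poly_apply L (p + q) w = mat_poly_apply L p w + mat_poly_apply L q w"
  by (induction p q rule: poly_induct2) (simp_all add: vector_add_ldistrib matrix_vector_right_distrib algebra_simps)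

lemma mat_poly_apply_smult: "mat_poly_apply L (smult c p) w = c *s mat_poly_apply L p w"
  by (induction p) (simp_all add: vector_scalar_commute vector_add_ldistrib vector_smult_assoc)

lemma mat_poly_apply_diff: "mat_poly_apply L (p - q) w = mat_poly_apply L p w - mat_poly_apply L q w"
proof -
  have "mat_poly_apply L (p - q) w = mat_poly_apply L (p + smult (-1) q) w" by simp
  also have "\<dots> = mat_poly_apply L p w + (-1) *s mat_poly_apply L q w" by (simp only: mat_poly_apply_add mat_poly_apply_smult)
  finally show ?thesis by (simp add: vec_eq_iff)
qed

lemma mat_poly_apply_linear_factor: "mat_poly_apply L ([:-r, 1:] * q) w = L *v mat_poly_apply L q w - r *s mat_poly_apply L q w"
  by (simp add: mat_poly_apply_diff mat_poly_apply_smult)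

lemma mat_poly_apply_monom: "mat_poly_apply L (monom a j) w = a *s ((\<lambda>v. L *v v) ^^ j) w"
proof (induction j)
  case 0 then show ?case by (simp add: monom_0)
next
  case (Suc j) then show ?case by (simp add: monom_Suc vector_scalar_commute)
qed

lemma mat_poly_apply_sum: "finite S \<Longrightarrow> mat_poly_apply L (\<Sum>i\<in>S. p i) w = (\<Sum>i\<in>S. mat_poly_apply L (p i) w)"
  by (induction S rule: finite_induct) (simp_all add: mat_poly_apply_add)

lemma mat_poly_apply_closed:
  assumes R0: "0 \<in> R" and Radd: "\<And>u w. u \<in> R \<Longrightarrow> w \<in> R \<Longrightarrow> u + w \<in> R"
    and Rscale: "\<And>c u. u \<in> R \<Longrightarrow> c *s u \<in> R" and RL: "\<And>u. u \<in> R \<Longrightarrow> L *v u \<in> R"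
    and w: "w \<in> R"
  shows "mat_poly_apply L p w \<in> R"
  by (induction p) (simp_all add: R0 Radd Rscale RL w)

lemma mat_poly_apply_root_eigenvector:
  assumes R0: "0 \<in> R" and Radd: "\<And>u w. u \<in> R \<Longrightarrow> w \<in> R \<Longrightarrow> u + w \<in> R"
    and Rscale: "\<And>c u. u \<in> R \<Longrightarrow> c *s u \<in> R" and RL: "\<And>u. u \<in> R \<Longrightarrow> L *v u \<in> R"
    and "p \<noteq> 0" "w \<in> R" "w \<noteq> 0" "mat_poly_apply L p w = 0"
  shows "\<exists>v c. v \<in> R \<and> v \<noteq> 0 \<and> L *v v = c *s v"
  using assms(5-8)
proof (induction "degree p" arbitrary: p w rule: less_induct)
  case less
  show ?case
  proof (cases "degree p = 0")
    case True
    then have "p = [:coeff p 0:]" using degree_0_id by metis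
    then have "mat_poly_apply L p w = coeff p 0 *s w"
      by (metis mat_poly_apply_pCons mat_poly_apply_0 matrix_vector_mult_0_right add_0_right)
    moreover have "coeff p 0 \<noteq> 0" using \<open>p \<noteq> 0\<close> \<open>p = [:coeff p 0:]\<close> by (metis pCons_0_0)
    ultimately show ?thesis using less.prems by simp
  next
    case False
    then obtain r where "poly p r = 0" using False by (metis constant_degree fundamental_theorem_of_algebra)
    then obtain q where pq: "p = [:-r, 1:] * q" using poly_eq_0_iff_dvd by (metis dvdE)
    have q0: "q \<noteq> 0" using pq less.prems by auto
    have "degree ([:-r,1:] * q) = degree [:-r,1:] + degree q" by (rule degree_mult_eq) (use q0 in auto)
    then have "degree p = 1 + degree q" using pq by simp
    then have dq: "degree q < degree p" by simp
    define v where "v = mat_poly_apply L q w"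
    have vR: "v \<in> R" unfolding v_def by (rule mat_poly_apply_closed[OF R0 Radd Rscale RL less.prems(2)])
    show ?thesis
    proof (cases "v = 0")
      case True
      then have "mat_poly_apply L q w = 0" using v_def by simp
      then show ?thesis using less.hyps[OF dq q0 less.prems(2,3)] by simp
    next
      case False
      have "L *v v - r *s v = 0" using less.prems(4) unfolding pq mat_poly_apply_linear_factor v_def by simp
      then have "L *v v = r *s v" by simp
      then show ?thesis using vR False by blast
    qed
  qed
qed

lemma of_real_vector_scalar_mult: "(complex_of_real c) *s (v::complex^'n::finite) = c *\<^sub>R v"
  by (simp add: vec_eq_iff) (simp add: scaleR_conv_of_real)

lemma exists_annihilating_poly: "\<exists>p. p \<noteq> 0 \<and> mat_poly_apply L p (w::complex^'n::finite) = 0"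
proof -
  define D where "D = DIM(complex^'n)"
  define f where "f j = ((\<lambda>v. L *v v) ^^ j) w" for j
  show ?thesis
  proof (cases "inj_on f {..D}")
    case False
    then obtain i j where ij: "i \<noteq> j" "f i = f j" by (auto simp: inj_on_def)
    define p where "p = monom (1::complex) i - monom 1 j"
    have "coeff p i = 1" using ij by (simp add: p_def coeff_monom)
    then have "p \<noteq> 0" by auto
    moreover have "mat_poly_apply L p w = 0"
      unfolding p_def mat_poly_apply_diff using ij(2) by (simp add: mat_poly_apply_monom f_def)
    ultimately show ?thesis by blast
  next
    case True
    let ?S = "f ` {..D}"
    have "card ?S = D + 1" using True by (simp add: card_image)
    then have "dependent ?S" by (intro dependent_biggerset) (simp add: D_def)
    then obtain u where u: "\<exists>v\<in>?S. u v \<noteq> 0" "(\<Sum>v\<in>?S. u v *\<^sub>R v) = 0"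
      using real_vector.dependent_finite[of ?S] by auto
    define p where "p = (\<Sum>j\<le>D. monom (complex_of_real (u (f j))) j)"
    obtain j where j: "j \<le> D" "u (f j) \<noteq> 0" using u(1) by auto
    have "coeff p j = complex_of_real (u (f j))"
      unfolding p_def coeff_sum using j(1) by (simp add: coeff_monom)
    then have "p \<noteq> 0" using j(2) by auto
    moreover have "mat_poly_apply L p w = 0"
    proof -
      have "mat_poly_apply L p w = (\<Sum>j\<le>D. u (f j) *\<^sub>R f j)"
        unfolding p_def by (simp add: mat_poly_apply_sum mat_poly_apply_monom f_def of_real_vector_scalar_mult)
      also have "\<dots> = (\<Sum>v\<in>?S. u v *\<^sub>R v)" using sum.reindex[OF True, of "\<lambda>v. u v *\<^sub>R v"] by simp
      finally show ?thesis using u(2) by simp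
    qed
    ultimately show ?thesis by blast
  qed
qed

lemma invariant_set_has_eigenvector:
  fixes L :: "complex^'n::finite^'n"
  assumes "0 \<in> R" and "\<And>u w. u \<in> R \<Longrightarrow> w \<in> R \<Longrightarrow> u + w \<in> R"
    and "\<And>c u. u \<in> R \<Longrightarrow> c *s u \<in> R" and "\<And>u. u \<in> R \<Longrightarrow> L *v u \<in> R"
    and "w \<in> R" "w \<noteq> 0"
  obtains v c where "v \<in> R" "v \<noteq> 0" "L *v v = c *s v"
proof -
  obtain p where p: "p \<noteq> 0" "mat_poly_apply L p w = 0" using exists_annihilating_poly by blast
  show thesis using mat_poly_apply_root_eigenvector[OF assms(1-4) p(1) assms(5,6) p(2)] that by blast
qed

definition Re_vec :: "complex^'n::finite \<Rightarrow> real^'n" where "Re_vec v = (\<chi> i. Re (v $ i))"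
definition Im_vec :: "complex^'n::finite \<Rightarrow> real^'n" where "Im_vec v = (\<chi> i. Im (v $ i))"
definition of_real_vec :: "real^'n::finite \<Rightarrow> complex^'n" where "of_real_vec e = (\<chi> i. complex_of_real (e $ i))"

lemma Re_vec_cmat: "Re_vec (cmat M *v u) = M *v Re_vec u"
  by (simp add: vec_eq_iff Re_vec_def matrix_vector_mult_def cmat_def)
lemma Im_vec_cmat: "Im_vec (cmat M *v u) = M *v Im_vec u"
  by (simp add: vec_eq_iff Im_vec_def matrix_vector_mult_def cmat_def)
lemma Re_vec_smult: "Re_vec (c *s v) = Re c *\<^sub>R Re_vec v - Im c *\<^sub>R Im_vec v"
  by (simp add: vec_eq_iff Re_vec_def Im_vec_def)
lemma Im_vec_smult: "Im_vec (c *s v) = Im c *\<^sub>R Re_vec v + Re c *\<^sub>R Im_vec v"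
  by (simp add: vec_eq_iff Re_vec_def Im_vec_def)
lemma vec_eq_0_iff_Re_Im: "v = 0 \<longleftrightarrow> Re_vec v = 0 \<and> Im_vec v = 0"
  by (auto simp: vec_eq_iff Re_vec_def Im_vec_def complex_eq_iff)
lemma Re_vec_of_real_vec [simp]: "Re_vec (of_real_vec e) = e" by (simp add: vec_eq_iff Re_vec_def of_real_vec_def)

lemma cmat_matrix_mult: "cmat (A ** B) = cmat A ** cmat B"
  by (simp add: vec_eq_iff cmat_def matrix_matrix_mult_def)

lemma matrix_range_has_eigenvector:
  fixes L W M :: "real^'n::finite^'n"
  assumes comm: "L ** W = W ** M" and W0: "W \<noteq> 0"
  obtains u c where "cmat W *v u \<noteq> 0" "cmat L *v (cmat W *v u) = c *s (cmat W *v u)"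
proof -
  define R where "R = range (\<lambda>u. cmat W *v u)"
  have R0: "0 \<in> R" unfolding R_def by (auto intro!: image_eqI[of _ _ 0])
  have Radd: "u + w \<in> R" if "u \<in> R" "w \<in> R" for u w
    using that unfolding R_def by (auto simp: matrix_vector_right_distrib[symmetric])
  have Rscale: "c *s u \<in> R" if "u \<in> R" for c u
    using that unfolding R_def by (auto simp: vector_scalar_commute[symmetric])
  have RL: "cmat L *v u \<in> R" if "u \<in> R" for u
  proof -
    obtain x where x: "u = cmat W *v x" using \<open>u \<in> R\<close> R_def by auto
    have "cmat L *v u = cmat W *v (cmat M *v x)"
      unfolding x matrix_vector_mul_assoc cmat_matrix_mult[symmetric] comm ..
    then show ?thesis unfolding R_def by auto
  qed
  obtain e where "W *v e \<noteq> 0" using W0 matrix_eq[of W 0] by auto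
  then have "cmat W *v of_real_vec e \<noteq> 0" by (auto simp: vec_eq_0_iff_Re_Im Re_vec_cmat)
  moreover have "cmat W *v of_real_vec e \<in> R" unfolding R_def by auto
  ultimately obtain v c where "v \<in> R" "v \<noteq> 0" "cmat L *v v = c *s v"
    using invariant_set_has_eigenvector[OF R0 Radd Rscale RL] by metis
  then show thesis using that unfolding R_def by blast
qed

lemma isotropic_eigenvalue_imaginary:
  fixes L W :: "real^'n::finite^'n"
  assumes symW: "transpose W = W" and psd: "\<And>y. 0 \<le> y \<bullet> (W *v y)"
    and isotropic: "\<And>x. x \<bullet> (L *v (W *v x)) = 0"
    and eigen: "cmat L *v (cmat W *v u) = c *s (cmat W *v u)" and nonzero: "cmat W *v u \<noteq> 0"
  shows "Re c = 0"
proof (rule ccontr)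
  assume "Re c \<noteq> 0"
  define a where "a = Re_vec u"
  define b where "b = Im_vec u"
  have La: "L *v (W *v a) = Re c *\<^sub>R (W *v a) - Im c *\<^sub>R (W *v b)"
    using arg_cong[OF eigen, of Re_vec] by (simp add: Re_vec_cmat Im_vec_cmat Re_vec_smult a_def b_def)
  have Lb: "L *v (W *v b) = Im c *\<^sub>R (W *v a) + Re c *\<^sub>R (W *v b)"
    using arg_cong[OF eigen, of Im_vec] by (simp add: Re_vec_cmat Im_vec_cmat Im_vec_smult a_def b_def)
  have "a \<bullet> (W *v b) = b \<bullet> (W *v a)"
    using inner_symmetric_matrix[OF symW, of a b] by (simp add: inner_commute)
  with isotropic[of a] isotropic[of b] La Lb
  have "Re c * (a \<bullet> (W *v a) + b \<bullet> (W *v b)) = 0"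
    by (simp add: inner_diff_right inner_add_right algebra_simps)
  with \<open>Re c \<noteq> 0\<close> psd[of a] psd[of b] have "a \<bullet> (W *v a) = 0" "b \<bullet> (W *v b) = 0"
    by (simp_all add: add_nonneg_eq_0_iff)
  then have "W *v a = 0" "W *v b = 0"
    using psd_form_kernel[of "\<lambda>y. W *v y"] inner_symmetric_matrix[OF symW] psd by auto
  then show False
    using nonzero by (simp add: vec_eq_0_iff_Re_Im Re_vec_cmat Im_vec_cmat a_def b_def)
qed

lemma J_hyperbolic_invariant_psd_eq_0:
  fixes A1 W M :: "real^('n::finite + 'n)^('n + 'n)"
  assumes hyp: "J_hyperbolic A1" and symW: "transpose W = W" and psd: "\<forall>y. 0 \<le> y \<bullet> (W *v y)"
    and comm: "(Jmat ** A1) ** W = W ** M"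
    and isotropic: "\<forall>x. x \<bullet> ((Jmat ** A1) *v (W *v x)) = 0"
  shows "W = 0"
proof (rule ccontr)
  assume "W \<noteq> 0"
  then obtain u c where v: "cmat W *v u \<noteq> 0" "cmat (Jmat ** A1) *v (cmat W *v u) = c *s (cmat W *v u)"
    using matrix_range_has_eigenvector[OF comm] by blast
  then have "Re c = 0"
    using isotropic_eigenvalue_imaginary[OF symW] psd isotropic by blast
  then have "c = \<i> * complex_of_real (Im c)" by (simp add: complex_eq_iff)
  with v hyp show False unfolding J_hyperbolic_def by metis
qed

lemma inner_matrix_entries: "(a::real^'n::finite^'m::finite) \<bullet> X = (\<Sum>i\<in>UNIV. \<Sum>j\<in>UNIV. a$i$j * X$i$j)"
  by (simp add: inner_vec_def inner_real_def)

lemma inner_matrix_mult_right: "(a::real^'n::finite^'n) \<bullet> (B ** S) = (transpose B ** a) \<bullet> S"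
proof -
  have "a \<bullet> (B ** S) = (\<Sum>i\<in>UNIV. \<Sum>j\<in>UNIV. \<Sum>k\<in>UNIV. a$i$j * B$i$k * S$k$j)"
    by (simp add: inner_matrix_entries matrix_matrix_mult_def sum_distrib_left mult.assoc)
  also have "\<dots> = (\<Sum>i\<in>UNIV. \<Sum>k\<in>UNIV. \<Sum>j\<in>UNIV. a$i$j * B$i$k * S$k$j)"
    by (rule sum.cong[OF refl], rule sum.swap)
  also have "\<dots> = (\<Sum>k\<in>UNIV. \<Sum>i\<in>UNIV. \<Sum>j\<in>UNIV. a$i$j * B$i$k * S$k$j)"
    by (rule sum.swap)
  also have "\<dots> = (\<Sum>k\<in>UNIV. \<Sum>j\<in>UNIV. \<Sum>i\<in>UNIV. a$i$j * B$i$k * S$k$j)"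
    by (rule sum.cong[OF refl], rule sum.swap)
  also have "\<dots> = (transpose B ** a) \<bullet> S"
    by (simp add: inner_matrix_entries matrix_matrix_mult_def transpose_def sum_distrib_left mult.commute mult.left_commute)
  finally show ?thesis .
qed

lemma inner_transpose_right: "(a::real^'n::finite^'n) \<bullet> transpose X = transpose a \<bullet> X"
proof -
  have "a \<bullet> transpose X = (\<Sum>i\<in>UNIV. \<Sum>j\<in>UNIV. a$i$j * X$j$i)" by (simp add: inner_matrix_entries transpose_def)
  also have "\<dots> = (\<Sum>j\<in>UNIV. \<Sum>i\<in>UNIV. a$i$j * X$j$i)" by (rule sum.swap)
  also have "\<dots> = transpose a \<bullet> X" by (simp add: inner_matrix_entries transpose_def)
  finally show ?thesis .
qed

definition outer_prod :: "real^'n::finite \<Rightarrow> real^'n^'n" where "outer_prod y = (\<chi> i j. y$i * y$j)"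

lemma outer_prod_mult: "outer_prod y *v z = (y \<bullet> z) *\<^sub>R y"
  by (simp add: vec_eq_iff outer_prod_def matrix_vector_mult_def inner_vec_def sum_distrib_left mult.commute mult.left_commute)

lemma inner_outer_prod: "(a::real^'n::finite^'n) \<bullet> outer_prod y = y \<bullet> (a *v y)"
  by (simp add: inner_matrix_entries outer_prod_def inner_vec_def matrix_vector_mult_def sum_distrib_left mult.commute mult.left_commute)

lemma affine_nonneg_imp_slope_eq_0:
  assumes "\<forall>t::real. 0 \<le> c + t * d"
  shows "d = 0"
proof (rule ccontr)
  assume "d \<noteq> 0"
  then have "(- (\<bar>c\<bar> + 1) / d) * d = - (\<bar>c\<bar> + 1)" by simp
  then show False using assms[rule_format, of "- (\<bar>c\<bar> + 1) / d"] by linarith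
qed

lemma affine_nonneg_imp_slope_nonneg:
  assumes "\<forall>t::real\<ge>0. 0 \<le> c + t * d"
  shows "0 \<le> d"
proof (rule ccontr)
  assume "\<not> 0 \<le> d"
  then have d: "d < 0" by simp
  then have "((\<bar>c\<bar> + 1) / (- d)) * d = - (\<bar>c\<bar> + 1)" by simp
  moreover have "(\<bar>c\<bar> + 1) / (- d) \<ge> 0" using d by (intro divide_nonneg_pos) auto
  ultimately show False using assms[rule_format, of "(\<bar>c\<bar> + 1) / (- d)"] by linarith
qed

lemma separating_hyperplane_subspace:
  fixes P V :: "'a::euclidean_space set"
  assumes P: "convex P" "p0 \<in> P" and V: "subspace V" and disj: "P \<inter> V = {}"
  obtains a where "a \<noteq> 0" "\<forall>p\<in>P. 0 \<le> a \<bullet> p" "\<forall>v\<in>V. a \<bullet> v = 0"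
proof -
  define C where "C = (\<Union>p\<in>P. \<Union>v\<in>V. {p - v})"
  have "convex C" unfolding C_def by (rule convex_differences[OF P(1) subspace_imp_convex[OF V]])
  moreover have "0 \<notin> C" using disj unfolding C_def by auto
  ultimately obtain a where a: "a \<noteq> 0" "\<forall>x\<in>C. 0 \<le> a \<bullet> x"
    using separating_hyperplane_set_0 by blast
  have "0 \<le> a \<bullet> p" if "p \<in> P" for p
    using a(2) that subspace_0[OF V] unfolding C_def by force
  moreover have "a \<bullet> v = 0" if "v \<in> V" for v
  proof -
    have "0 \<le> a \<bullet> p0 + t * (- (a \<bullet> v))" for t
    proof -
      have "p0 - t *\<^sub>R v \<in> C" unfolding C_def using P(2) subspace_mul[OF V that] by blast
      then show ?thesis using a(2) by (auto simp: inner_diff_right)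
    qed
    then show ?thesis using affine_nonneg_imp_slope_eq_0[of "a \<bullet> p0" "- (a \<bullet> v)"] by simp
  qed
  ultimately show thesis using a(1) that by blast
qed

definition ge_identity_matrices :: "(real^'n::finite^'n) set" where
  "ge_identity_matrices = {X. \<forall>y. y \<bullet> y \<le> y \<bullet> (X *v y)}"

lemma convex_ge_identity_matrices: "convex ge_identity_matrices"
  unfolding convex_def ge_identity_matrices_def
proof (intro ballI allI impI, safe)
  fix X Y :: "real^'n^'n" and u v :: real and y :: "real^'n"
  assume X: "\<forall>y. y \<bullet> y \<le> y \<bullet> (X *v y)" and Y: "\<forall>y. y \<bullet> y \<le> y \<bullet> (Y *v y)"
    and u: "0 \<le> u" and v: "0 \<le> v" and uv: "u + v = 1"
  have "y \<bullet> y = u * (y \<bullet> y) + v * (y \<bullet> y)" using uv by (simp add: distrib_right[symmetric])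
  also have "\<dots> \<le> u * (y \<bullet> (X *v y)) + v * (y \<bullet> (Y *v y))"
    using X Y u v by (intro add_mono mult_left_mono) auto
  also have "\<dots> = y \<bullet> ((u *\<^sub>R X + v *\<^sub>R Y) *v y)"
    by (simp add: matrix_vector_mult_add_rdistrib scaleR_matrix_vector_assoc[symmetric] inner_add_right)
  finally show "y \<bullet> y \<le> y \<bullet> ((u *\<^sub>R X + v *\<^sub>R Y) *v y)" .
qed

lemma mat_1_ge_identity: "mat 1 \<in> ge_identity_matrices"
  by (simp add: ge_identity_matrices_def)

lemma dual_ge_identity_matrices:
  fixes a :: "real^'n::finite^'n"
  assumes a: "\<forall>X\<in>ge_identity_matrices. 0 \<le> a \<bullet> X"
  shows "transpose a = a" and "\<forall>y. 0 \<le> y \<bullet> (a *v y)"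
proof -
  define K where "K = a - transpose a"
  have "a \<bullet> K = 0"
  proof -
    have "y \<bullet> (K *v y) = 0" for y
      using inner_matrix_transpose[of y "transpose a" y] unfolding K_def
      by (simp add: matrix_vector_mult_diff_rdistrib inner_diff_right inner_commute)
    then have "mat 1 + t *\<^sub>R K \<in> ge_identity_matrices" for t
      by (simp add: ge_identity_matrices_def matrix_vector_mult_add_rdistrib
          scaleR_matrix_vector_assoc[symmetric] inner_add_right)
    then have "0 \<le> a \<bullet> (mat 1 + t *\<^sub>R K)" for t using a by blast
    then have "\<forall>t. 0 \<le> a \<bullet> mat 1 + t * (a \<bullet> K)" by (simp add: inner_add_right)
    then show ?thesis by (rule affine_nonneg_imp_slope_eq_0)
  qed
  moreover have "(a - transpose a) \<bullet> (a - transpose a) = 2 * (a \<bullet> K)"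
    using inner_transpose_right[of "transpose a" a]
    unfolding K_def by (simp add: inner_diff_left inner_diff_right inner_commute)
  ultimately show "transpose a = a" by simp
  show "\<forall>y. 0 \<le> y \<bullet> (a *v y)"
  proof
    fix y :: "real^'n"
    have "mat 1 + t *\<^sub>R outer_prod y \<in> ge_identity_matrices" if "t \<ge> 0" for t
      using that by (simp add: ge_identity_matrices_def matrix_vector_mult_add_rdistrib
          scaleR_matrix_vector_assoc[symmetric] inner_add_right outer_prod_mult inner_commute[of _ y] mult.assoc)
    then have "0 \<le> a \<bullet> (mat 1 + t *\<^sub>R outer_prod y)" if "t \<ge> 0" for t using a that by blast
    then have "\<forall>t\<ge>0. 0 \<le> a \<bullet> mat 1 + t * (a \<bullet> outer_prod y)" by (simp add: inner_add_right)
    then show "0 \<le> y \<bullet> (a *v y)"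
      using affine_nonneg_imp_slope_nonneg inner_outer_prod by metis
  qed
qed

lemma lyapunov_dual_commutes:
  fixes A1 a :: "real^('n::finite + 'n)^('n + 'n)"
  defines "B \<equiv> A1 ** Jmat"
  assumes symA: "transpose A1 = A1" and syma: "transpose a = a"
    and orth: "\<And>S. transpose S = S \<Longrightarrow> a \<bullet> (B ** S + transpose (B ** S)) = 0"
  shows "(Jmat ** A1) ** a = a ** (A1 ** Jmat)" and "\<forall>x. x \<bullet> ((Jmat ** A1) *v (a *v x)) = 0"
proof -
  define N where "N = transpose B ** a"
  have NS: "N \<bullet> S = 0" if "transpose S = S" for S
  proof -
    have "a \<bullet> (B ** S + transpose (B ** S)) = 2 * (N \<bullet> S)"
      unfolding N_def using inner_transpose_right[of a "B ** S"] syma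
      by (simp add: inner_add_right inner_matrix_mult_right)
    then show ?thesis using orth[OF that] by simp
  qed
  have "N \<bullet> (N + transpose N) = 0" by (rule NS) (simp add: transpose_add)
  moreover have "(N + transpose N) \<bullet> (N + transpose N) = 2 * (N \<bullet> (N + transpose N))"
    using inner_transpose_right[of "transpose N" N]
    by (simp add: inner_add_left inner_add_right inner_commute)
  ultimately have NT0: "N + transpose N = 0" by simp
  have tB: "transpose B = (- Jmat) ** A1" unfolding B_def by (simp add: matrix_transpose_mul symA transpose_Jmat)
  have tN: "transpose N = a ** B" unfolding N_def by (simp add: matrix_transpose_mul syma)
  have cm: "Jmat *v (A1 *v (a *v x)) = a *v (A1 *v (Jmat *v x))" for x
  proof -
    have "(transpose B ** a) *v x + (a ** B) *v x = 0"
      using arg_cong[where f="\<lambda>M. M *v x", OF NT0] tN unfolding N_def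
      by (simp only: matrix_vector_mult_add_rdistrib matrix_vector_mult_0)
    moreover have "(transpose B ** a) *v x = - (Jmat *v (A1 *v (a *v x)))"
      unfolding tB by (simp only: matrix_vector_mul_assoc[symmetric] matrix_vector_mult_uminus_left)
    moreover have "(a ** B) *v x = a *v (A1 *v (Jmat *v x))"
      unfolding B_def by (simp only: matrix_vector_mul_assoc[symmetric])
    ultimately show ?thesis by (simp add: algebra_simps)
  qed
  show "(Jmat ** A1) ** a = a ** (A1 ** Jmat)"
    by (rule matrix_eq[THEN iffD2]) (simp add: matrix_vector_mul_assoc[symmetric] cm)
  show "\<forall>x. x \<bullet> ((Jmat ** A1) *v (a *v x)) = 0"
  proof
    fix x :: "real^('n + 'n)"
    have "x \<bullet> ((Jmat ** A1) *v (a *v x)) = - ((Jmat *v x) \<bullet> (A1 *v (a *v x)))"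
      by (simp add: matrix_vector_mul_assoc[symmetric] inner_Jmat_right)
    moreover have "x \<bullet> ((Jmat ** A1) *v (a *v x)) = (A1 *v (a *v x)) \<bullet> (Jmat *v x)"
      using inner_symmetric_matrix[OF syma] inner_symmetric_matrix[OF symA]
      by (metis cm matrix_vector_mul_assoc)
    ultimately show "x \<bullet> ((Jmat ** A1) *v (a *v x)) = 0" by (simp add: inner_commute)
  qed
qed

lemma inner_symmetrized_matrix:
  "y \<bullet> ((M + transpose M) *v y) = 2 * (y \<bullet> ((M::real^'n::finite^'n) *v y))"
  using inner_matrix_transpose[of y "transpose M" y]
  by (simp add: matrix_vector_mult_add_rdistrib inner_add_right inner_commute)

lemma subspace_symmetrized_products:
  fixes B :: "real^'n::finite^'n"
  shows "subspace ((\<lambda>S. B ** S + transpose (B ** S)) ` {S. transpose S = S})"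
proof (rule linear_subspace_image)
  show "linear (\<lambda>S. B ** S + transpose (B ** S))"
    by (rule linearI) (simp_all add: matrix_add_ldistrib matrix_scalar_ac transpose_add transpose_scalar
        scalar_matrix_assoc[symmetric] scaleR_add_right)
  show "subspace {S :: real^'n^'n. transpose S = S}"
    by (simp add: subspace_def transpose_add transpose_scalar transpose_zero)
qed

lemma J_hyperbolic_lyapunov_matrix:
  fixes A1 :: "real^('n::finite + 'n)^('n + 'n)"
  assumes hyp: "J_hyperbolic A1" and symA: "transpose A1 = A1"
  obtains S where "transpose S = S" "\<And>y. y \<bullet> y \<le> y \<bullet> (A1 *v (Jmat *v (S *v y)))"
proof (rule ccontr)
  assume no_S: "\<not> thesis"
  define B where "B = A1 ** Jmat"
  define T where "T S = B ** S + transpose (B ** S)" for S :: "real^('n + 'n)^('n + 'n)"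
  define V where "V = T ` {S. transpose S = S}"
  have quad_T: "y \<bullet> (T S *v y) = 2 * (y \<bullet> (A1 *v (Jmat *v (S *v y))))" for S y
    unfolding T_def inner_symmetrized_matrix by (simp add: B_def matrix_vector_mul_assoc matrix_mul_assoc)
  have "ge_identity_matrices \<inter> V = {}"
  proof (rule ccontr)
    assume "ge_identity_matrices \<inter> V \<noteq> {}"
    then obtain S where S: "T S \<in> ge_identity_matrices" "transpose S = S" unfolding V_def by auto
    have "y \<bullet> y \<le> y \<bullet> (A1 *v (Jmat *v ((2 *\<^sub>R S) *v y)))" for y
    proof -
      have "y \<bullet> y \<le> y \<bullet> (T S *v y)" using S(1) unfolding ge_identity_matrices_def by blast
      then show ?thesis
        using quad_T[of y S] by (simp add: scaleR_matrix_vector_assoc[symmetric] matrix_vector_mult_scaleR)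
    qed
    moreover have "transpose (2 *\<^sub>R S) = 2 *\<^sub>R S" using S(2) by (simp add: transpose_scalar)
    ultimately show False using no_S that by blast
  qed
  moreover have "subspace V"
    unfolding V_def T_def by (rule subspace_symmetrized_products)
  ultimately obtain a where a: "a \<noteq> 0" "\<forall>X\<in>ge_identity_matrices. 0 \<le> a \<bullet> X" "\<forall>v\<in>V. a \<bullet> v = 0"
    using separating_hyperplane_subspace[OF convex_ge_identity_matrices mat_1_ge_identity] by blast
  have syma: "transpose a = a" and psd: "\<forall>y. 0 \<le> y \<bullet> (a *v y)"
    using dual_ge_identity_matrices[OF a(2)] by blast+
  have "a \<bullet> (B ** S + transpose (B ** S)) = 0" if "transpose S = S" for S
    using a(3) that unfolding V_def T_def by blast
  from lyapunov_dual_commutes[OF symA syma, folded B_def, OF this]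
  have "a = 0" using J_hyperbolic_invariant_psd_eq_0[OF hyp syma psd] by blast
  then show False using a(1) by simp
qed

lemma J_hyperbolic_indefinite:
  fixes A1 :: "real^('n::finite + 'n)^('n + 'n)"
  assumes hyp: "J_hyperbolic A1" and symA: "transpose A1 = A1" and inv: "invertible A1"
  shows "\<exists>y. y \<bullet> (A1 *v y) < 0"
proof (rule ccontr)
  assume "\<not> ?thesis"
  then have psdA: "\<forall>y. 0 \<le> y \<bullet> (A1 *v y)" by (simp add: not_less)
  obtain W where W1: "A1 ** W = mat 1" using inv invertible_right_inverse by blast
  then have W2: "W ** A1 = mat 1" using matrix_left_right_inverse by blast
  have symW: "transpose W = W"
  proof -
    have "transpose W ** A1 = mat 1"
      using arg_cong[OF W1, of transpose] by (simp add: matrix_transpose_mul symA)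
    then have "transpose W = mat 1 ** W" by (metis W1 matrix_mul_assoc matrix_mul_rid)
    then show ?thesis by simp
  qed
  have AW: "A1 *v (W *v y) = y" for y using W1 by (simp add: matrix_vector_mul_assoc)
  have psd: "\<forall>y. 0 \<le> y \<bullet> (W *v y)"
  proof
    fix y
    have "y \<bullet> (W *v y) = (W *v y) \<bullet> (A1 *v (W *v y))" by (simp add: AW inner_commute)
    then show "0 \<le> y \<bullet> (W *v y)" using psdA by simp
  qed
  have comm: "(Jmat ** A1) ** W = W ** (A1 ** Jmat)"
    by (simp add: matrix_mul_assoc[symmetric] W1) (simp add: matrix_mul_assoc W2)
  have isotropic: "\<forall>x. x \<bullet> ((Jmat ** A1) *v (W *v x)) = 0"
    by (simp add: matrix_vector_mul_assoc[symmetric] AW inner_Jmat_self)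
  have "W = 0" by (rule J_hyperbolic_invariant_psd_eq_0[OF hyp symW psd comm isotropic])
  then have "(mat 1 :: real^('n + 'n)^('n + 'n)) = 0" using W1 by (simp add: vec_eq_iff matrix_matrix_mult_def)
  then show False by (simp add: vec_eq_iff mat_def) (metis zero_neq_one)
qed

section \<open>Derivatives along linear flows\<close>

definition lie_deriv_matrix :: "real^'n::finite^'n \<Rightarrow> real^'n^'n \<Rightarrow> real^'n^'n" where
  "lie_deriv_matrix L B = - (B ** L + transpose L ** B)"

lemma transpose_lie_deriv_matrix:
  "transpose B = B \<Longrightarrow> transpose (lie_deriv_matrix L B) = lie_deriv_matrix L B"
  unfolding lie_deriv_matrix_def
  by (simp add: transpose_uminus transpose_diff matrix_transpose_mul)

lemma qform_lie_deriv_matrix: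
  assumes "transpose B = B"
  shows "y \<bullet> (B *v (- (L *v y))) + (- (L *v y)) \<bullet> (B *v y) = qform (lie_deriv_matrix L B) y"
proof -
  have "y \<bullet> (transpose L *v (B *v y)) = y \<bullet> (B *v (L *v y))"
    using inner_matrix_transpose[of y "transpose L" "B *v y"] inner_symmetric_matrix[OF assms, of "L *v y" y]
    by (simp add: inner_commute del: transpose_matrix_vector)
  moreover have "(L *v y) \<bullet> (B *v y) = y \<bullet> (B *v (L *v y))"
    using inner_symmetric_matrix[OF assms, of "L *v y" y] by (simp add: inner_commute)
  ultimately show ?thesis unfolding qform_def lie_deriv_matrix_def
    by (simp add: matrix_vector_mult_uminus_left matrix_vector_mult_uminus_right
        matrix_vector_mult_diff_rdistrib matrix_vector_mul_assoc[symmetric] inner_diff_right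
        del: transpose_matrix_vector)
qed

lemma qform_lie_deriv_Jmat_mult:
  fixes A1 S :: "real^('n::finite + 'n)^('n + 'n)"
  assumes symA1: "transpose A1 = A1" and symS: "transpose S = S"
  shows "qform (lie_deriv_matrix (Jmat ** A1) S) y = 2 * (y \<bullet> (A1 *v (Jmat *v (S *v y))))"
proof -
  let ?v = "- ((Jmat ** A1) *v y)"
  have "y \<bullet> (S *v ?v) = - ((S *v y) \<bullet> (Jmat *v (A1 *v y)))"
    using inner_symmetric_matrix[OF symS, of y]
    by (simp add: matrix_vector_mult_uminus_right matrix_vector_mul_assoc[symmetric])
  also have "\<dots> = (Jmat *v (S *v y)) \<bullet> (A1 *v y)" by (simp add: inner_Jmat_right)
  also have "\<dots> = y \<bullet> (A1 *v (Jmat *v (S *v y)))"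
    using inner_symmetric_matrix[OF symA1, of "Jmat *v (S *v y)" y] by (simp add: inner_commute)
  finally have "y \<bullet> (S *v ?v) = y \<bullet> (A1 *v (Jmat *v (S *v y)))" .
  moreover have "?v \<bullet> (S *v y) = y \<bullet> (S *v ?v)"
    using inner_symmetric_matrix[OF symS, of y ?v] by (simp add: inner_commute)
  ultimately show ?thesis
    unfolding qform_lie_deriv_matrix[OF symS, symmetric] by simp
qed

(* The derivative of f at y in direction - L y. For L = J A1 this is the Hamiltonian vector
   field of y\<bullet>A1 y/2 (see hamvf_gradient), so flow derivatives compute Poisson brackets. *)
definition has_flow_deriv :: "real^'n::finite^'n \<Rightarrow> (real^'n \<Rightarrow> real) \<Rightarrow> real^'n \<Rightarrow> real \<Rightarrow> bool" where
  "has_flow_deriv L f y a \<longleftrightarrow> (\<exists>D. (f has_derivative D) (at y) \<and> linear D \<and> D (- (L *v y)) = a)"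

lemma has_flow_deriv_add:
  "has_flow_deriv L f y a \<Longrightarrow> has_flow_deriv L g y b \<Longrightarrow> has_flow_deriv L (\<lambda>y. f y + g y) y (a + b)"
  unfolding has_flow_deriv_def by (auto intro!: has_derivative_add linear_compose_add)

lemma has_flow_deriv_cmult:
  assumes "has_flow_deriv L f y a"
  shows "has_flow_deriv L (\<lambda>y. c * f y) y (c * a)"
proof -
  obtain D where D: "(f has_derivative D) (at y)" "linear D" "D (- (L *v y)) = a"
    using assms unfolding has_flow_deriv_def by blast
  have "linear (\<lambda>u. c * D u)"
    using D(2) by (intro linearI) (simp_all add: linear_add linear_scale algebra_simps)
  with D show ?thesis
    unfolding has_flow_deriv_def by (intro exI[of _ "\<lambda>u. c * D u"]) (auto intro!: has_derivative_mult_right)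
qed

lemma has_flow_deriv_qform_mult:
  assumes "transpose B = B" "transpose C = C"
    and "lie_deriv_matrix L B = B'" "lie_deriv_matrix L C = C'"
  shows "has_flow_deriv L (\<lambda>y. qform B y * qform C y) y (qform B y * qform C' y + qform B' y * qform C y)"
proof -
  let ?D = "\<lambda>u. qform B y * (y \<bullet> (C *v u) + u \<bullet> (C *v y)) + (y \<bullet> (B *v u) + u \<bullet> (B *v y)) * qform C y"
  have "((\<lambda>y. qform B y * qform C y) has_derivative ?D) (at y)"
    by (rule has_derivative_mult[OF has_derivative_qform has_derivative_qform])
  moreover have "linear ?D"
    by (rule linearI) (simp_all add: matrix_vector_right_distrib matrix_vector_mult_scaleR
        inner_add_left inner_add_right algebra_simps)
  ultimately show ?thesis
    unfolding has_flow_deriv_def assms(3,4)[symmetric]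
    by (intro exI[of _ ?D]) (simp add: qform_lie_deriv_matrix[OF assms(1), symmetric]
        qform_lie_deriv_matrix[OF assms(2), symmetric] inner_commute)
qed

(* G, p, p2 stand for y\<bullet>Sy and its first two flow derivatives, N, n, n2 for |y|\<^sup>2 and its;
   eq says that the flow derivative of (y\<bullet>Sy)\<^sup>2 + d|y|\<^sup>4 vanishes. *)
lemma quartic_bracket_ineq:
  fixes G p p2 n n2 N d Kn K2 Kn2 :: real
  assumes N: "N > 0" and p: "p \<ge> 2 * N" and p2: "\<bar>p2\<bar> \<le> K2 * N" and n: "\<bar>n\<bar> \<le> Kn * N"
    and n2: "\<bar>n2\<bar> \<le> Kn2 * N" and K: "Kn \<ge> 0" "K2 \<ge> 0" "Kn2 \<ge> 0"
    and d: "d = 1 / (Kn * K2 + Kn2 + 1)" and eq: "G * p + d * (N * n) = 0"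
  shows "p * p + G * p2 + d * (n * n + N * n2) > 0"
proof -
  have "Kn * K2 + Kn2 + 1 > 0" using K mult_nonneg_nonneg[of Kn K2] by linarith
  then have d0: "d > 0" and "d * (Kn * K2 + Kn2 + 1) = 1"
    unfolding d by simp_all
  then have d1: "d * (Kn * K2) + d * Kn2 + d = 1" by (simp add: distrib_left)
  have "\<bar>G\<bar> * (2 * N) \<le> \<bar>G\<bar> * p" using p by (simp add: mult_left_mono)
  also have "\<dots> = \<bar>G * p\<bar>" using p N by (simp add: abs_mult)
  also have "\<dots> = \<bar>d * (N * n)\<bar>" using eq by (simp add: eq_neg_iff_add_eq_0)
  also have "\<dots> = d * N * \<bar>n\<bar>" using d0 N by (simp add: abs_mult)
  also have "\<dots> \<le> d * N * (Kn * N)" using n d0 N by (simp add: mult_left_mono)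
  finally have "\<bar>G\<bar> \<le> d * Kn * N / 2" using N by (simp add: field_simps)
  then have "\<bar>G * p2\<bar> \<le> (d * Kn * N / 2) * (K2 * N)"
    unfolding abs_mult using p2 by (intro mult_mono) auto
  moreover have "d * (N * n2) \<ge> - (d * (Kn2 * N * N))"
  proof -
    have "N * (- (Kn2 * N)) \<le> N * n2" using n2 N by (intro mult_left_mono) (auto simp: abs_le_iff)
    then show ?thesis using mult_left_mono[of _ _ d] d0 by (fastforce simp: algebra_simps)
  qed
  moreover have "p * p \<ge> 4 * (N * N)"
    using mult_mono[OF p p] N p by simp
  moreover have "d * (n * n) \<ge> 0" using d0 by simp
  moreover have "(d * (Kn * K2) / 2 + d * Kn2) * (N * N) \<le> 1 * (N * N)"
  proof (rule mult_right_mono)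
    show "d * (Kn * K2) / 2 + d * Kn2 \<le> 1"
    proof -
      have "0 \<le> d * (Kn * K2)" using d0 K by simp
      then show ?thesis using d0 d1 by linarith
    qed
  qed simp
  moreover have "N * N > 0" "- \<bar>G * p2\<bar> \<le> G * p2" using N by simp_all
  ultimately show ?thesis by (simp add: algebra_simps)
qed

lemma quartic_lyapunov_function:
  fixes L S :: "real^'n::finite^'n"
  assumes symS: "transpose S = S" and S_pos: "\<And>y. 2 * (y \<bullet> y) \<le> qform (lie_deriv_matrix L S) y"
  obtains \<Phi> \<Phi>' \<Phi>'' :: "real^'n \<Rightarrow> real" and d :: real
  where "d > 0" "real_polynomial_function \<Phi>" "\<And>y. d * ((y \<bullet> y) * (y \<bullet> y)) \<le> \<Phi> y"
    and "\<And>y. has_flow_deriv L \<Phi> y (\<Phi>' y)" "\<And>y. has_flow_deriv L \<Phi>' y (\<Phi>'' y)"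
    and "\<And>y. y \<noteq> 0 \<Longrightarrow> \<Phi>' y \<noteq> 0 \<or> \<Phi>'' y > 0"
proof -
  define I0 where "I0 = (mat 1 :: real^'n^'n)"
  define S1 where "S1 = lie_deriv_matrix L S"
  define S2 where "S2 = lie_deriv_matrix L S1"
  define I1 where "I1 = lie_deriv_matrix L I0"
  define I2 where "I2 = lie_deriv_matrix L I1"
  have symI0: "transpose I0 = I0" by (simp add: I0_def)
  have symS1: "transpose S1 = S1" unfolding S1_def by (rule transpose_lie_deriv_matrix[OF symS])
  have symI1: "transpose I1 = I1" unfolding I1_def by (rule transpose_lie_deriv_matrix[OF symI0])
  have qI0: "qform I0 y = y \<bullet> y" for y by (simp add: qform_def I0_def)
  obtain K2 where K2: "K2 \<ge> 0" "\<And>y. \<bar>qform S2 y\<bar> \<le> K2 * (y \<bullet> y)" using qform_bound by blast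
  obtain Kn where Kn: "Kn \<ge> 0" "\<And>y. \<bar>qform I1 y\<bar> \<le> Kn * (y \<bullet> y)" using qform_bound by blast
  obtain Kn2 where Kn2: "Kn2 \<ge> 0" "\<And>y. \<bar>qform I2 y\<bar> \<le> Kn2 * (y \<bullet> y)" using qform_bound by blast
  define d where "d = 1 / (Kn * K2 + Kn2 + 1)"
  have "Kn * K2 + Kn2 + 1 > 0" using K2(1) Kn(1) Kn2(1) mult_nonneg_nonneg[of Kn K2] by linarith
  then have "d > 0" by (simp add: d_def)
  define \<Phi> where "\<Phi> y = qform S y * qform S y + d * (qform I0 y * qform I0 y)" for y
  define \<Phi>' where "\<Phi>' y = (qform S y * qform S1 y + qform S1 y * qform S y)
      + d * (qform I0 y * qform I1 y + qform I1 y * qform I0 y)" for y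
  define \<Phi>'' where "\<Phi>'' y = ((qform S y * qform S2 y + qform S1 y * qform S1 y)
      + (qform S1 y * qform S1 y + qform S2 y * qform S y))
      + d * ((qform I0 y * qform I2 y + qform I1 y * qform I1 y)
      + (qform I1 y * qform I1 y + qform I2 y * qform I0 y))" for y
  note lie_eqs = S1_def[symmetric] S2_def[symmetric] I1_def[symmetric] I2_def[symmetric]
  have "has_flow_deriv L \<Phi> y (\<Phi>' y)" for y
    unfolding \<Phi>_def \<Phi>'_def
    by (intro has_flow_deriv_add has_flow_deriv_cmult has_flow_deriv_qform_mult symS symI0 lie_eqs)
  moreover have "has_flow_deriv L \<Phi>' y (\<Phi>'' y)" for y
    unfolding \<Phi>'_def \<Phi>''_def
    by (intro has_flow_deriv_add has_flow_deriv_cmult has_flow_deriv_qform_mult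
        symS symI0 symS1 symI1 lie_eqs)
  moreover have "real_polynomial_function \<Phi>"
    unfolding \<Phi>_def
    by (intro real_polynomial_function.intros(3,4) real_polynomial_function.intros(2)
        real_polynomial_function_qform[of id, unfolded id_def] bounded_linear_ident)
  moreover have "d * ((y \<bullet> y) * (y \<bullet> y)) \<le> \<Phi> y" for y
    by (simp add: \<Phi>_def qI0)
  moreover have "\<Phi>' y \<noteq> 0 \<or> \<Phi>'' y > 0" if "y \<noteq> 0" for y
  proof (cases "\<Phi>' y = 0")
    case True
    have S1_pos: "qform S1 y \<ge> 2 * (y \<bullet> y)" using S_pos by (simp add: S1_def)
    have "qform S y * qform S1 y + d * ((y \<bullet> y) * qform I1 y) = 0"
      using True unfolding \<Phi>'_def qI0 by (simp add: algebra_simps)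
    with quartic_bracket_ineq[OF _ S1_pos K2(2) Kn(2) Kn2(2) Kn(1) K2(1) Kn2(1) d_def]
    have "qform S1 y * qform S1 y + qform S y * qform S2 y
        + d * (qform I1 y * qform I1 y + (y \<bullet> y) * qform I2 y) > 0"
      using that by simp
    then show ?thesis unfolding \<Phi>''_def qI0 by (simp add: algebra_simps)
  qed simp
  ultimately show thesis using that \<open>d > 0\<close> by blast
qed

lemma liouville_half_id_plus_hamiltonian:
  fixes B :: "real^('n::finite + 'n)^('n + 'n)"
  assumes symB: "transpose B = B"
  shows "liouville (\<lambda>z. (1/2) *\<^sub>R z + Jmat *v (B *v z))"
proof -
  define Y where "Y = (\<lambda>z::real^('n + 'n). (1/2) *\<^sub>R z + Jmat *v (B *v z))"
  have linY: "linear Y" unfolding Y_def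
    by (rule linearI) (simp_all add: matrix_vector_right_distrib matrix_vector_mult_scaleR algebra_simps)
  have "omega0 (Y u) v + omega0 u (Y v) = omega0 u v" for u v
  proof -
    have "omega0 (Y u) v = 1/2 * omega0 u v + (B *v u) \<bullet> v"
      unfolding Y_def omega0_def by (simp add: inner_add_left inner_Jmat_Jmat)
    moreover have "omega0 u (Y v) = 1/2 * omega0 u v - u \<bullet> (B *v v)"
      unfolding Y_def omega0_def
      by (simp add: matrix_vector_right_distrib matrix_vector_mult_scaleR inner_add_right inner_diff_right
          Jmat_mult_Jmat_mult)
    moreover have "(B *v u) \<bullet> v = u \<bullet> (B *v v)" using inner_symmetric_matrix[OF symB] by metis
    ultimately show ?thesis by simp
  qed
  then show ?thesis
    unfolding Y_def[symmetric] liouville_def frechet_derivative_linear[OF linY]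
    using smooth_on_linear[OF linY] by blast
qed

lemma liouville_half_id: "liouville (\<lambda>z::real^('n::finite + 'n). (1/2) *\<^sub>R z)"
  using liouville_half_id_plus_hamiltonian[of 0] by (simp add: transpose_zero)

lemma asymp_regular_linear:
  fixes Y :: "real^('n::finite + 'n) \<Rightarrow> real^('n + 'n)"
  assumes "linear Y"
  shows "asymp_regular Y"
proof -
  have "0 \<le> onorm Y" using assms linear_conv_bounded_linear onorm_pos_le by blast
  then show ?thesis
    unfolding asymp_regular_def frechet_derivative_linear[OF assms] by (intro exI[of _ "onorm Y + 1"]) auto
qed

lemma quadH_liouville_gap:
  assumes "transpose A = A"
  shows "frechet_derivative (quadH A) (at x) ((1/2) *\<^sub>R x) - quadH A x = 1"
  by (simp add: frechet_derivative_quadH[OF assms] quadH_def)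

lemma restricted_contact_quadH:
  fixes A :: "real^('n::finite + 'n)^('n + 'n)"
  assumes "transpose A = A"
  shows "restricted_contact (quadH A)"
  unfolding restricted_contact_def
proof (intro exI conjI allI impI)
  show "liouville (\<lambda>z::real^('n + 'n). (1/2) *\<^sub>R z)" by (rule liouville_half_id)
  show "asymp_regular (\<lambda>z::real^('n + 'n). (1/2) *\<^sub>R z)"
    by (rule asymp_regular_linear) (simp add: linearI scaleR_add_right)
  fix x assume "quadH A x = 0"
  then show "frechet_derivative (quadH A) (at x) ((1/2) *\<^sub>R x) > 0"
    using quadH_liouville_gap[OF assms, of x] by simp
qed

lemma h2_quadH:
  fixes A :: "real^('n::finite + 'n)^('n + 'n)"
  assumes "transpose A = A"
  shows "h2 (quadH A)"
  unfolding h2_def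
proof (intro exI allI)
  fix x u v w :: "real^('n + 'n)"
  have "linear (\<lambda>z. u \<bullet> (A *v z))"
    by (rule linearI) (simp_all add: matrix_vector_right_distrib matrix_vector_mult_scaleR inner_add_right)
  then have "(\<lambda>y. frechet_derivative (\<lambda>z. frechet_derivative (quadH A) (at z) u) (at y) v) = (\<lambda>y. u \<bullet> (A *v v))"
    by (simp add: frechet_derivative_quadH[OF assms] frechet_derivative_linear)
  moreover have "frechet_derivative (\<lambda>y. u \<bullet> (A *v v)) (at x) = (\<lambda>w. 0)"
    using frechet_derivative_at[OF has_derivative_const] by metis
  ultimately have "third_deriv (quadH A) x u v w = 0" unfolding third_deriv_def by simp
  then show "\<bar>third_deriv (quadH A) x u v w\<bar> * norm x \<le> 0 * norm u * norm v * norm w" by simp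
qed

lemma tentacular_hyperboloid_quadH:
  fixes A :: "real^('n::finite + 'n)^('n + 'n)"
  assumes "hyperboloid_matrix A" and "strongly_tentacular (quadH A)"
  shows "tentacular_hyperboloid (quadH A -` {0})"
proof -
  have "symplectic_matrix (mat 1 :: real^('n + 'n)^('n + 'n))"
    unfolding symplectic_matrix_def invertible_def by auto
  then show ?thesis
    unfolding tentacular_hyperboloid_def using assms by (intro exI[of _ "mat 1"] exI[of _ A]) simp
qed

lemma poisson_quadH_block_diag:
  fixes A0 :: "real^('m::finite + 'm)^('m + 'm)" and A1 :: "real^('k::finite + 'k)^('k + 'k)"
  assumes symA0: "transpose A0 = A0" and symA1: "transpose A1 = A1"
    and flow: "has_flow_deriv (Jmat ** A1) \<Phi> (projY z) a"
  shows "poisson (quadH (block_diag A0 A1)) (\<lambda>z. c * quadH A0 (projX z) + \<Phi> (projY z)) z = a"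
proof -
  obtain D where D: "(\<Phi> has_derivative D) (at (projY z))" "linear D" "D (- ((Jmat ** A1) *v projY z)) = a"
    using flow unfolding has_flow_deriv_def by blast
  let ?x = "projX z"
  have H: "(quadH (block_diag A0 A1) has_derivative (\<lambda>u. u \<bullet> (block_diag A0 A1 *v z))) (at z)"
    by (rule has_derivative_quadH[OF transpose_block_diag[OF symA0 symA1]])
  have dX: "((\<lambda>z. c * quadH A0 (projX z)) has_derivative (\<lambda>u. c * (projX u \<bullet> (A0 *v ?x)))) (at z)"
    by (intro has_derivative_mult_right has_derivative_compose[of projX, OF _ has_derivative_quadH[OF symA0]]
        linear_imp_has_derivative linear_projX)
  have dY: "((\<lambda>z. \<Phi> (projY z)) has_derivative (\<lambda>u. D (projY u))) (at z)"
    by (rule has_derivative_compose[OF linear_imp_has_derivative[OF linear_projY] D(1)])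
  have lin: "linear (\<lambda>u. c * (projX u \<bullet> (A0 *v ?x)) + D (projY u))"
    using D(2) by (intro linearI) (simp_all add: linear_add linear_scale inner_add_left algebra_simps)
  have "(Jmat *v (A0 *v ?x)) \<bullet> (A0 *v ?x) = 0"
    using inner_Jmat_self[of "A0 *v ?x"] by (simp add: inner_commute)
  moreover have "D (- (Jmat *v (A1 *v projY z))) = a"
    using D(3) by (simp add: matrix_vector_mul_assoc)
  ultimately show ?thesis
    using poisson_gradient[OF H has_derivative_add[OF dX dY] lin]
    by (simp add: projX_Jmat projY_Jmat)
qed

lemma real_polynomial_function_quadH_plus:
  fixes A0 :: "real^('m::finite + 'm)^('m + 'm)" and \<Phi> :: "real^('k::finite + 'k) \<Rightarrow> real"
  assumes "real_polynomial_function \<Phi>"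
  shows "real_polynomial_function
           (\<lambda>z::real^(('m + 'k) + ('m + 'k)). quadH A0 (projX z) + \<Phi> (projY z))"
proof -
  have "real_polynomial_function (\<lambda>z::real^(('m + 'k) + ('m + 'k)). qform A0 (projX z))"
    by (rule real_polynomial_function_qform) (simp add: linear_projX linear_conv_bounded_linear[symmetric])
  moreover have "real_polynomial_function (\<Phi> \<circ> (projY :: real^(('m + 'k) + ('m + 'k)) \<Rightarrow> _))"
    using assms linear_projY linear_conv_bounded_linear
    by (intro real_polynomial_function_compose polynomial_function_bounded_linear) auto
  ultimately show ?thesis
    unfolding quadH_def qform_def[symmetric] o_def
    by (intro real_polynomial_function_diff real_polynomial_function.intros(2-4))
qed

lemma coercive_on_UNIV_block:
  fixes F :: "real^(('m::finite + 'k::finite) + ('m + 'k)) \<Rightarrow> real"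
  assumes cont: "continuous_on UNIV F" and \<mu>: "\<mu> > 0" and d: "d > 0"
    and bound: "\<And>z. \<mu> * (projX z \<bullet> projX z) + d * ((projY z \<bullet> projY z) * (projY z \<bullet> projY z)) - C \<le> F z"
  shows "coercive_on UNIV F"
  unfolding coercive_on_def
proof
  fix c :: real
  have "closed {x \<in> UNIV. F x \<le> c}" using closed_Collect_le[OF cont continuous_on_const] by simp
  moreover have "bounded {x \<in> UNIV. F x \<le> c}"
    unfolding bounded_iff
  proof (intro exI ballI)
    fix z assume "z \<in> {x \<in> UNIV. F x \<le> c}"
    then have Fz: "F z \<le> c" by simp
    let ?a = "projX z \<bullet> projX z" and ?b = "projY z \<bullet> projY z"
    have a0: "\<mu> * ?a \<ge> 0" and b0: "d * (?b * ?b) \<ge> 0" using \<mu> d by simp_all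
    have "?a \<le> \<bar>c + C\<bar> / \<mu>"
      using bound[of z] Fz a0 b0 \<mu> by (simp add: field_simps)
    moreover have "?b \<le> 1 + \<bar>c + C\<bar> / d"
    proof (cases "?b \<le> 1")
      case True then show ?thesis using d by (simp add: add_increasing2)
    next
      case False
      then have "?b * 1 \<le> ?b * ?b" by (intro mult_left_mono) auto
      then have "d * ?b \<le> d * (?b * ?b)" using d by simp
      also have "\<dots> \<le> \<bar>c + C\<bar>" using bound[of z] Fz a0 by linarith
      finally show ?thesis using d by (simp add: field_simps)
    qed
    moreover have "norm z \<le> 1 + ?a + ?b"
    proof -
      have "(norm z)\<^sup>2 = ?a + ?b" by (simp add: power2_norm_eq_inner inner_projXY)
      then show ?thesis using norm_le_one_plus_power2[of z] by simp
    qed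
    ultimately show "norm z \<le> 2 + \<bar>c + C\<bar> / \<mu> + \<bar>c + C\<bar> / d" by linarith
  qed
  ultimately show "compact {x \<in> UNIV. F x \<le> c}" by (simp add: compact_eq_bounded_closed)
qed

section \<open>The split Hamiltonian\<close>

locale block_hyperboloid =
  fixes A0 :: "real^('m::finite + 'm)^('m + 'm)" and A1 :: "real^('k::finite + 'k)^('k + 'k)"
  assumes A0_sym: "transpose A0 = A0"
    and A0_pd: "\<forall>x. x \<noteq> 0 \<longrightarrow> x \<bullet> (A0 *v x) > 0"
    and A1_sym: "transpose A1 = A1"
    and A1_nondeg: "invertible A1"
    and A1_hyp: "J_hyperbolic A1"
begin

abbreviation A :: "real^(('m + 'k) + ('m + 'k))^(('m + 'k) + ('m + 'k))" where
  "A \<equiv> block_diag A0 A1"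

lemma A_sym: "transpose A = A"
  by (rule transpose_block_diag[OF A0_sym A1_sym])

lemma h1_quadH: "h1 (quadH A)"
proof -
  obtain \<mu>0 where \<mu>0: "\<mu>0 > 0" "\<And>x. \<mu>0 * (x \<bullet> x) \<le> x \<bullet> (A0 *v x)"
    using pos_def_lower_bound[OF A0_sym A0_pd] by blast
  obtain v1 \<mu>1 where \<mu>1: "\<forall>y. \<mu>1 * (y \<bullet> y) \<le> y \<bullet> (A1 *v y)"
    using symmetric_matrix_least_eigenvalue[OF A1_sym] by blast
  obtain S where symS: "transpose S = S" and S: "\<And>y. y \<bullet> y \<le> y \<bullet> (A1 *v (Jmat *v (S *v y)))"
    using J_hyperbolic_lyapunov_matrix[OF A1_hyp A1_sym] by blast
  \<comment> \<open>t is large enough that the Lyapunov term outweighs the negative part of A1\<close>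
  define t where "t = \<bar>\<mu>0\<bar> + \<bar>\<mu>1\<bar> + 1"
  define B where "B = block_diag (0::real^('m + 'm)^('m + 'm)) (t *\<^sub>R S)"
  define Y where "Y z = (1/2) *\<^sub>R z + Jmat *v (B *v z)" for z
  have symB: "transpose B = B"
    unfolding B_def by (rule transpose_block_diag) (simp_all add: transpose_zero transpose_scalar symS)
  have "linear Y" unfolding Y_def
    by (rule linearI) (simp_all add: matrix_vector_right_distrib matrix_vector_mult_scaleR algebra_simps)
  moreover have "\<mu>0 / 2 * (norm z)\<^sup>2 - 1 \<le> frechet_derivative (quadH A) (at z) (Y z)" for z
  proof -
    let ?x = "projX z" and ?y = "projY z"
    have "(Jmat *v (S *v ?y)) \<bullet> (A1 *v ?y) = ?y \<bullet> (A1 *v (Jmat *v (S *v ?y)))"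
      using inner_symmetric_matrix[OF A1_sym, of "Jmat *v (S *v ?y)" ?y] by (simp add: inner_commute)
    then have dHY: "frechet_derivative (quadH A) (at z) (Y z)
        = 1/2 * (?x \<bullet> (A0 *v ?x) + ?y \<bullet> (A1 *v ?y)) + t * (?y \<bullet> (A1 *v (Jmat *v (S *v ?y))))"
      by (simp add: frechet_derivative_quadH[OF A_sym] Y_def B_def inner_projXY[of _ "A *v z"]
          projX_Jmat projY_Jmat scaleR_matrix_vector_assoc[symmetric] matrix_vector_mult_scaleR
          inner_add_left algebra_simps)
    have "t * (?y \<bullet> ?y) \<le> t * (?y \<bullet> (A1 *v (Jmat *v (S *v ?y))))"
      using S t_def by (intro mult_left_mono) auto
    moreover have "\<mu>0 / 2 * (?y \<bullet> ?y) \<le> (\<mu>1 / 2 + t) * (?y \<bullet> ?y)"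
      by (intro mult_right_mono) (auto simp: t_def)
    moreover have "(norm z)\<^sup>2 = ?x \<bullet> ?x + ?y \<bullet> ?y" by (simp add: power2_norm_eq_inner inner_projXY)
    ultimately show ?thesis
      using \<mu>0(2)[of ?x] \<mu>1[rule_format, of ?y] unfolding dHY by (simp add: algebra_simps)
  qed
  ultimately show ?thesis
    unfolding h1_def Y_def
    using liouville_half_id_plus_hamiltonian[OF symB] asymp_regular_linear \<mu>0(1)
    by (intro exI[of _ "\<lambda>z. (1/2) *\<^sub>R z + Jmat *v (B *v z)"] exI[of _ "\<mu>0 / 2"] exI[of _ 1]) auto
qed

lemma quadH_projY_eq_0_bound:
  assumes "\<mu> > 0" "\<And>x. \<mu> * (x \<bullet> x) \<le> x \<bullet> (A0 *v x)" "quadH A z = 0" "projY z = 0"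
  shows "norm z \<le> 1 + 2 / \<mu>"
proof -
  have "projX z \<bullet> (A0 *v projX z) = 2"
    using assms(3,4) by (simp add: quadH_def inner_block_diag)
  then have "projX z \<bullet> projX z \<le> 2 / \<mu>"
    using assms(1) assms(2)[of "projX z"] by (simp add: field_simps)
  moreover have "(norm z)\<^sup>2 = projX z \<bullet> projX z"
    using assms(4) by (simp add: power2_norm_eq_inner inner_projXY)
  ultimately show ?thesis
    using norm_le_one_plus_power2[of z] by linarith
qed

lemma h3_quadH: "h3 (quadH A)"
proof -
  obtain \<mu>0 where \<mu>0: "\<mu>0 > 0" "\<And>x. \<mu>0 * (x \<bullet> x) \<le> x \<bullet> (A0 *v x)"
    using pos_def_lower_bound[OF A0_sym A0_pd] by blast
  obtain S where symS: "transpose S = S" and S: "\<And>y. y \<bullet> y \<le> y \<bullet> (A1 *v (Jmat *v (S *v y)))"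
    using J_hyperbolic_lyapunov_matrix[OF A1_hyp A1_sym] by blast
  define L where "L = Jmat ** A1"
  have S_pos: "2 * (y \<bullet> y) \<le> qform (lie_deriv_matrix L S) y" for y
    using S[of y] by (simp add: L_def qform_lie_deriv_Jmat_mult[OF A1_sym symS])
  obtain d \<Phi> \<Phi>' \<Phi>'' where d: "d > 0" and poly: "real_polynomial_function \<Phi>"
    and \<Phi>_bound: "\<And>y. d * ((y \<bullet> y) * (y \<bullet> y)) \<le> \<Phi> y"
    and flow: "\<And>y. has_flow_deriv L \<Phi> y (\<Phi>' y)" "\<And>y. has_flow_deriv L \<Phi>' y (\<Phi>'' y)"
    and alternative: "\<And>y. y \<noteq> 0 \<Longrightarrow> \<Phi>' y \<noteq> 0 \<or> \<Phi>'' y > 0"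
    using quartic_lyapunov_function[OF symS S_pos] by metis
  define F where "F z = quadH A0 (projX z) + \<Phi> (projY z)" for z
  have PF: "poisson (quadH A) F z = \<Phi>' (projY z)" for z
    using poisson_quadH_block_diag[OF A0_sym A1_sym flow(1)[unfolded L_def], of 1]
    by (simp add: F_def[abs_def])
  have "poisson (quadH A) F = (\<lambda>z. 0 * quadH A0 (projX z) + \<Phi>' (projY z))"
    using PF by auto
  then have PPF: "poisson (quadH A) (poisson (quadH A) F) z = \<Phi>'' (projY z)" for z
    by (simp only:) (rule poisson_quadH_block_diag[OF A0_sym A1_sym flow(2)[unfolded L_def]])
  have poly_F: "real_polynomial_function F"
    unfolding F_def by (rule real_polynomial_function_quadH_plus[OF poly])
  have coercive_F: "coercive_on UNIV F"
  proof (rule coercive_on_UNIV_block)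
    show "continuous_on UNIV F"
      using poly_F continuous_on_polymonial_function real_polynomial_function_eq
      by blast
    show "\<mu>0 / 2 * (projX z \<bullet> projX z) + d * ((projY z \<bullet> projY z) * (projY z \<bullet> projY z)) - 1 \<le> F z" for z
      using \<mu>0(2)[of "projX z"] \<Phi>_bound[of "projY z"] by (simp add: F_def quadH_def)
  qed (use \<mu>0(1) d in auto)
  have brackets: "\<forall>z \<in> quadH A -` {0} - cball 0 (1 + 2 / \<mu>0).
      poisson (quadH A) F z \<noteq> 0 \<or> poisson (quadH A) (poisson (quadH A) F) z > 0"
  proof
    fix z assume "z \<in> quadH A -` {0} - cball 0 (1 + 2 / \<mu>0)"
    then have "projY z \<noteq> 0"
      using quadH_projY_eq_0_bound[OF \<mu>0] by auto
    then show "poisson (quadH A) F z \<noteq> 0 \<or> poisson (quadH A) (poisson (quadH A) F) z > 0"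
      using alternative PF PPF by simp
  qed
  show ?thesis
    unfolding h3_def
    using smooth_on_real_polynomial_function[OF poly_F] coercive_F brackets
    by (intro exI[of _ UNIV] exI[of _ F] exI[of _ "cball 0 (1 + 2 / \<mu>0)"]) auto
qed

lemma invertible_A: "invertible A"
proof -
  obtain W where W: "W ** A1 = mat 1"
    using A1_nondeg invertible_right_inverse matrix_left_right_inverse by blast
  have "z = 0" if "A *v z = 0" for z
  proof (rule proj_XY_eqI)
    have A0z: "A0 *v projX z = 0" and A1z: "A1 *v projY z = 0"
      using arg_cong[OF that, of projX] arg_cong[OF that, of projY] by simp_all
    show "projX z = projX 0" using A0_pd A0z by force
    have "projY z = W *v (A1 *v projY z)" by (simp add: matrix_vector_mul_assoc W)
    then show "projY z = projY 0" by (simp add: A1z)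
  qed
  then show ?thesis using invertible_left_inverse matrix_left_invertible_ker by blast
qed

lemma hyperboloid_matrix_A: "hyperboloid_matrix A"
proof -
  have "\<exists>c>0. \<exists>v. v \<noteq> 0 \<and> A *v v = c *s v"
  proof -
    obtain v \<mu> where v: "v \<noteq> 0" "(- A) *v v = \<mu> *\<^sub>R v" and \<mu>: "\<forall>y. \<mu> * (y \<bullet> y) \<le> y \<bullet> ((- A) *v y)"
      using symmetric_matrix_least_eigenvalue[of "- A"] A_sym by (auto simp: transpose_uminus)
    obtain i :: "'m + 'm" where True by blast
    define y where "y = joinXY (axis i (1::real)) (0::real^('k + 'k))"
    have "y \<bullet> (A *v y) = axis i 1 \<bullet> (A0 *v axis i 1)" by (simp add: inner_block_diag y_def)
    also have "\<dots> > 0" using A0_pd by (simp add: axis_eq_0_iff)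
    finally have "\<mu> < 0"
      using \<mu>[rule_format, of y] by (simp add: y_def inner_projXY inner_axis_axis matrix_vector_mult_uminus_left)
    moreover have "A *v v = (- \<mu>) *s v"
      using v(2) by (simp add: matrix_vector_mult_uminus_left scalar_mult_eq_scaleR minus_equation_iff)
    ultimately show ?thesis using v(1) by (intro exI[of _ "- \<mu>"]) auto
  qed
  moreover have "\<exists>c<0. \<exists>v. v \<noteq> 0 \<and> A *v v = c *s v"
  proof -
    obtain y1 where y1: "y1 \<bullet> (A1 *v y1) < 0"
      using J_hyperbolic_indefinite[OF A1_hyp A1_sym A1_nondeg] by blast
    obtain v \<mu> where v: "v \<noteq> 0" "A *v v = \<mu> *\<^sub>R v" and \<mu>: "\<forall>y. \<mu> * (y \<bullet> y) \<le> y \<bullet> (A *v y)"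
      using symmetric_matrix_least_eigenvalue[OF A_sym] by blast
    define y where "y = joinXY (0::real^('m + 'm)) y1"
    have "y \<bullet> (A *v y) = y1 \<bullet> (A1 *v y1)" "y \<bullet> y = y1 \<bullet> y1"
      by (simp_all add: inner_block_diag inner_projXY y_def)
    moreover have "y1 \<bullet> y1 > 0" using y1 by auto
    ultimately have "\<mu> < 0" using \<mu>[rule_format, of y] y1 by (smt (verit) mult_nonneg_nonneg)
    then show ?thesis using v by (auto simp: scalar_mult_eq_scaleR)
  qed
  ultimately show ?thesis
    unfolding hyperboloid_matrix_def using A_sym invertible_A by blast
qed

lemma strongly_tentacular_quadH: "strongly_tentacular (quadH A)"
  unfolding strongly_tentacular_def classH_def
  using smooth_quadH h1_quadH h2_quadH[OF A_sym] h3_quadH restricted_contact_quadH[OF A_sym] by blast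

end

theorem proposition1p2:
  fixes A0 :: "real^('m::finite + 'm)^('m + 'm)"
    and A1 :: "real^('k::finite + 'k)^('k + 'k)"
    and H :: "real^(('m + 'k) + ('m + 'k)) \<Rightarrow> real"
    and H0 :: "real^('m + 'm) \<Rightarrow> real"
    and Y0 :: "real^('m + 'm) \<Rightarrow> real^('m + 'm)"
  assumes A0_sym: "transpose A0 = A0"
    and A0_pd: "\<forall>x. x \<noteq> 0 \<longrightarrow> x \<bullet> (A0 *v x) > 0"
    and A1_sym: "transpose A1 = A1"
    and A1_nondeg: "invertible A1"
    and A1_hyp: "J_hyperbolic A1"
    and H_def: "H = (\<lambda>z. 1/2 * (projX z \<bullet> (A0 *v projX z)) + 1/2 * (projY z \<bullet> (A1 *v projY z)) - 1)"
    and H0_def: "H0 = (\<lambda>x. 1/2 * (x \<bullet> (A0 *v x)) - 1)"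
    and Y0_def: "Y0 = (\<lambda>x. (1/2) *\<^sub>R x)"
  shows "liouville Y0 \<and> (\<forall>x. frechet_derivative H0 (at x) (Y0 x) - H0 x > 0)
         \<and> strongly_tentacular H \<and> tentacular_hyperboloid (H -` {0})"
proof -
  interpret block_hyperboloid A0 A1
    using A0_sym A0_pd A1_sym A1_nondeg A1_hyp by unfold_locales
  have H: "H = quadH (block_diag A0 A1)"
    by (simp add: H_def quadH_def inner_block_diag fun_eq_iff algebra_simps)
  have H0: "H0 = quadH A0"
    by (simp add: H0_def quadH_def fun_eq_iff)
  show ?thesis
    unfolding Y0_def H0 H
    using liouville_half_id quadH_liouville_gap[OF A0_sym] strongly_tentacular_quadH
      tentacular_hyperboloid_quadH[OF hyperboloid_matrix_A strongly_tentacular_quadH]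
    by simp
qed

end
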